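(* Let $\ell\ge7$ and let $F$ be an apexed $\ell$-frame. Then every two holes of $F$ are equivalent.
   Context: A hole is an induced cycle of length at least four. Two holes $C,C'$ are close if $|V(C)\cap V(C')|\ge4$, and equivalent if there is a sequence of holes $C=C_1,\dots,C_n=C'$ with $C_i,C_{i+1}$ close for $1\le i<n$. A threshold graph is a graph with no induced four-vertex path, four-vertex cycle, or complement of a four-vertex cycle. $\ell$-frame for odd $\ell$: let $k\ge3$ and $a_1,\dots,a_k,b_1,\dots,b_k$ be distinct; for $1\le i\le k$, $P_i$ is a path of length $(\ell-3)/2$ with ends $a_i,b_i$, pairwise vertex-disjoint. $A,B$ are threshold graphs on $\{a_1,\dots,a_k\}$ and $\{b_1,\dots,b_k\}$ with $b_ib_j$ an edge iff $a_ia_j$ is not, each of $A,B$ either disconnected or two-connected. The $\ell$-frame is $A\cup B\cup P_1\cup\dots\cup P_k$ (no other edges). Exactly one of $A,B$ is disconnected; the apexed $\ell$-frame adds a new vertex adjacent exactly to all vertices of the disconnected one. $\ell$-frame for even $\ell$: let $m\ge0$, $n\ge2$, $m+n\ge3$, and $a_1,\dots,a_n,c_1,\dots,c_m,b_1,\dots,b_n,d_1,\dots,d_m$ distinct. $P_i$ ($1\le i\le n$) is a path of length $\ell/2-2$ between $a_i,b_i$; $Q_i$ ($1\le i\le m$) a path of length $\ell/2-1$ between $c_i,d_i$; all pairwise disjoint. $A$ on $\{a_i\}\cup\{c_j\}$ and $B$ on $\{b_i\}\cup\{d_j\}$: $\{c_j\},\{d_j\}$ cliques; $\{a_i\},\{b_i\}$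 stable; the bipartite graph of $A$ between $\{a_i\}$ and $\{c_j\}$ has no induced two-edge matching; $b_id_j$ is an edge iff $a_ic_j$ is not; some $a_i$ has degree zero in $A$ and some $b_i$ degree zero in $B$; no other edges. The $\ell$-frame is $A\cup B\cup\bigcup P_i\cup\bigcup Q_j$; the apexed $\ell$-frame adds a new vertex adjacent exactly to $V(A)$ and a new vertex adjacent exactly to $V(B)$. *)

theory Defs
  imports Main
begin

text \<open>A graph is given by a vertex set V and a symmetric adjacency relation E.
  Holes are identified with their vertex sets (they are induced subgraphs).\<close>

definition hole :: "'a set \<Rightarrow> ('a \<Rightarrow> 'a \<Rightarrow> bool) \<Rightarrow> 'a set \<Rightarrow> bool" where
  "hole V E C \<longleftrightarrow> (\<exists>xs. distinct xs \<and> length xs \<ge> 4 \<and> set xs = C \<and> C \<subseteq> V \<and>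
     (\<forall>i<length xs. \<forall>j<length xs.
        E (xs ! i) (xs ! j) \<longleftrightarrow> (j = Suc i mod length xs \<or> i = Suc j mod length xs)))"

definition holes_close :: "'a set \<Rightarrow> 'a set \<Rightarrow> bool" where
  "holes_close C C' \<longleftrightarrow> card (C \<inter> C') \<ge> 4"

definition holes_equivalent :: "'a set \<Rightarrow> ('a \<Rightarrow> 'a \<Rightarrow> bool) \<Rightarrow> 'a set \<Rightarrow> 'a set \<Rightarrow> bool" where
  "holes_equivalent V E C C' \<longleftrightarrow>
     (\<lambda>X Y. hole V E X \<and> hole V E Y \<and> holes_close X Y)\<^sup>*\<^sup>* C C'"

definition connected_graph :: "'a set \<Rightarrow> ('a \<Rightarrow> 'a \<Rightarrow> bool) \<Rightarrow> bool" where
  "connected_graph S R \<longleftrightarrow> S \<noteq> {} \<and>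
     (\<forall>x\<in>S. \<forall>y\<in>S. (\<lambda>u v. u \<in> S \<and> v \<in> S \<and> R u v)\<^sup>*\<^sup>* x y)"

definition two_connected :: "'a set \<Rightarrow> ('a \<Rightarrow> 'a \<Rightarrow> bool) \<Rightarrow> bool" where
  "two_connected S R \<longleftrightarrow> finite S \<and> card S \<ge> 3 \<and> connected_graph S R \<and>
     (\<forall>v\<in>S. connected_graph (S - {v}) R)"

definition threshold_graph :: "'a set \<Rightarrow> ('a \<Rightarrow> 'a \<Rightarrow> bool) \<Rightarrow> bool" where
  "threshold_graph S R \<longleftrightarrow> \<not> (\<exists>p\<in>S. \<exists>q\<in>S. \<exists>r\<in>S. \<exists>s\<in>S. distinct [p, q, r, s] \<and>
     ( \<comment> \<open>induced P4 p-q-r-s\<close>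
       (R p q \<and> R q r \<and> R r s \<and> \<not> R p r \<and> \<not> R q s \<and> \<not> R p s) \<or>
       \<comment> \<open>induced C4 p-q-r-s-p\<close>
       (R p q \<and> R q r \<and> R r s \<and> R s p \<and> \<not> R p r \<and> \<not> R q s) \<or>
       \<comment> \<open>induced 2K2 (complement of C4): edges pq, rs\<close>
       (R p q \<and> R r s \<and> \<not> R p r \<and> \<not> R p s \<and> \<not> R q r \<and> \<not> R q s)))"

text \<open>Paths: a list of distinct vertices; length L means L edges.\<close>

definition is_path :: "'a list \<Rightarrow> nat \<Rightarrow> 'a \<Rightarrow> 'a \<Rightarrow> bool" where
  "is_path p L u v \<longleftrightarrow> distinct p \<and> length p = Suc L \<and> hd p = u \<and> last p = v"

definition path_edge :: "'a list \<Rightarrow> 'a \<Rightarrow> 'a \<Rightarrow> bool" where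
  "path_edge p x y \<longleftrightarrow> (\<exists>t. Suc t < length p \<and>
     ((x = p ! t \<and> y = p ! Suc t) \<or> (x = p ! Suc t \<and> y = p ! t)))"

text \<open>Apexed l-frame, l odd. Paths indexed by i < k; a i, b i their ends;
  EA describes the edges of A (a_i a_j), B has b_i b_j iff a_i a_j is not an edge.\<close>

definition odd_apexed_frame :: "nat \<Rightarrow> 'a set \<Rightarrow> ('a \<Rightarrow> 'a \<Rightarrow> bool) \<Rightarrow> bool" where
  "odd_apexed_frame l V E \<longleftrightarrow> odd l \<and>
   (\<exists>(k::nat) (a::nat \<Rightarrow> 'a) (b::nat \<Rightarrow> 'a) (P::nat \<Rightarrow> 'a list) (EA::nat \<Rightarrow> nat \<Rightarrow> bool) (z::'a) (N::'a set).
     let Av = a ` {..<k};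
         AE = (\<lambda>x y. \<exists>i<k. \<exists>j<k. i \<noteq> j \<and> x = a i \<and> y = a j \<and> EA i j);
         Bv = b ` {..<k};
         BE = (\<lambda>x y. \<exists>i<k. \<exists>j<k. i \<noteq> j \<and> x = b i \<and> y = b j \<and> \<not> EA i j);
         W = (\<Union>i<k. set (P i))
     in k \<ge> 3 \<and> inj_on a {..<k} \<and> inj_on b {..<k} \<and> (\<forall>i<k. \<forall>j<k. a i \<noteq> b j) \<and>
        (\<forall>i<k. is_path (P i) ((l - 3) div 2) (a i) (b i)) \<and>
        (\<forall>i<k. \<forall>j<k. i \<noteq> j \<longrightarrow> set (P i) \<inter> set (P j) = {}) \<and>
        (\<forall>i j. EA i j = EA j i) \<and>
        threshold_graph Av AE \<and> threshold_graph Bv BE \<and>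
        (\<not> connected_graph Av AE \<or> two_connected Av AE) \<and>
        (\<not> connected_graph Bv BE \<or> two_connected Bv BE) \<and>
        ((\<not> connected_graph Av AE \<and> N = Av) \<or> (\<not> connected_graph Bv BE \<and> N = Bv)) \<and>
        z \<notin> W \<and> V = insert z W \<and>
        (\<forall>x y. E x y \<longleftrightarrow>
           (\<exists>i<k. path_edge (P i) x y) \<or> AE x y \<or> BE x y \<or>
           (x = z \<and> y \<in> N) \<or> (y = z \<and> x \<in> N)))"

text \<open>Apexed l-frame, l even. P i (i < n) from a i to b i, Q j (j < m) from c j to d j;
  R i j says a_i c_j is an edge of A (then b_i d_j is an edge of B iff not R i j).\<close>

definition even_apexed_frame :: "nat \<Rightarrow> 'a set \<Rightarrow> ('a \<Rightarrow> 'a \<Rightarrow> bool) \<Rightarrow> bool" where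
  "even_apexed_frame l V E \<longleftrightarrow> even l \<and>
   (\<exists>(n::nat) (m::nat) (a::nat \<Rightarrow> 'a) (b::nat \<Rightarrow> 'a) (c::nat \<Rightarrow> 'a) (d::nat \<Rightarrow> 'a)
      (P::nat \<Rightarrow> 'a list) (Q::nat \<Rightarrow> 'a list) (R::nat \<Rightarrow> nat \<Rightarrow> bool) (z1::'a) (z2::'a).
     let Av = a ` {..<n} \<union> c ` {..<m};
         AE = (\<lambda>x y. (\<exists>j<m. \<exists>j'<m. j \<noteq> j' \<and> x = c j \<and> y = c j') \<or>
                     (\<exists>i<n. \<exists>j<m. R i j \<and> ((x = a i \<and> y = c j) \<or> (x = c j \<and> y = a i))));
         Bv = b ` {..<n} \<union> d ` {..<m};
         BE = (\<lambda>x y. (\<exists>j<m. \<exists>j'<m. j \<noteq> j' \<and> x = d j \<and> y = d j') \<or>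
                     (\<exists>i<n. \<exists>j<m. \<not> R i j \<and> ((x = b i \<and> y = d j) \<or> (x = d j \<and> y = b i))));
         W = (\<Union>i<n. set (P i)) \<union> (\<Union>j<m. set (Q j))
     in n \<ge> 2 \<and> n + m \<ge> 3 \<and>
        inj_on a {..<n} \<and> inj_on b {..<n} \<and> inj_on c {..<m} \<and> inj_on d {..<m} \<and>
        a ` {..<n} \<inter> b ` {..<n} = {} \<and> a ` {..<n} \<inter> c ` {..<m} = {} \<and>
        a ` {..<n} \<inter> d ` {..<m} = {} \<and> b ` {..<n} \<inter> c ` {..<m} = {} \<and>
        b ` {..<n} \<inter> d ` {..<m} = {} \<and> c ` {..<m} \<inter> d ` {..<m} = {} \<and>
        (\<forall>i<n. is_path (P i) (l div 2 - 2) (a i) (b i)) \<and>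
        (\<forall>j<m. is_path (Q j) (l div 2 - 1) (c j) (d j)) \<and>
        (\<forall>i<n. \<forall>i'<n. i \<noteq> i' \<longrightarrow> set (P i) \<inter> set (P i') = {}) \<and>
        (\<forall>j<m. \<forall>j'<m. j \<noteq> j' \<longrightarrow> set (Q j) \<inter> set (Q j') = {}) \<and>
        (\<forall>i<n. \<forall>j<m. set (P i) \<inter> set (Q j) = {}) \<and>
        \<comment> \<open>no induced two-edge matching in the bipartite graph between {a_i} and {c_j}\<close>
        \<not> (\<exists>i<n. \<exists>i'<n. \<exists>j<m. \<exists>j'<m. R i j \<and> R i' j' \<and> \<not> R i j' \<and> \<not> R i' j) \<and>
        \<comment> \<open>some a_i has degree zero in A, some b_i has degree zero in B\<close>
        (\<exists>i<n. \<forall>j<m. \<not> R i j) \<and> (\<exists>i<n. \<forall>j<m. R i j) \<and>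
        z1 \<noteq> z2 \<and> z1 \<notin> W \<and> z2 \<notin> W \<and> V = {z1, z2} \<union> W \<and>
        (\<forall>x y. E x y \<longleftrightarrow>
           (\<exists>i<n. path_edge (P i) x y) \<or> (\<exists>j<m. path_edge (Q j) x y) \<or> AE x y \<or> BE x y \<or>
           (x = z1 \<and> y \<in> Av) \<or> (y = z1 \<and> x \<in> Av) \<or>
           (x = z2 \<and> y \<in> Bv) \<or> (y = z2 \<and> x \<in> Bv)))"

definition apexed_frame :: "nat \<Rightarrow> 'a set \<Rightarrow> ('a \<Rightarrow> 'a \<Rightarrow> bool) \<Rightarrow> bool" where
  "apexed_frame l V E \<longleftrightarrow> odd_apexed_frame l V E \<or> even_apexed_frame l V E"

end

(* An apexed frame with l >= 7 is a family of vertex-disjoint induced paths of length at least two,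
   each running from a side S to a side T, such that every other edge lies inside S or inside T and
   neither side contains an induced P4 or C4: for odd l (read backwards if necessary) S is the
   disconnected threshold graph together with the apex, which sees all of it, and T is the other
   threshold graph; for even l each side is a split graph without induced 2K2 together with its apex.

   A hole cannot lie within S, nor avoid it; it can enter or leave S only along the first edge of a
   path, after which it must follow the whole path. So every hole contains two complete paths, and
   two holes sharing two complete paths are close. It
   therefore suffices to join any two paths by a hole equivalent to a fixed one. Two paths are joined
   through the apex, or through the B-end of a path whose A-end is isolated (a disconnected threshold
   graph has an isolated vertex), or, for even l, via a path Q_j: these have at least four vertices,
   so all holes through one of them are close to each other. *)

theory Submission
  imports Defs
begin

section \<open>Paths as vertex lists\<close>

lemma path_edge_sym: "path_edge p x y \<Longrightarrow> path_edge p y x"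
  unfolding path_edge_def by blast

lemma path_edge_mem: "path_edge p x y \<Longrightarrow> x \<in> set p \<and> y \<in> set p"
  unfolding path_edge_def by (auto intro: nth_mem)

lemma path_edge_irrefl: "distinct p \<Longrightarrow> \<not> path_edge p x x"
  unfolding path_edge_def by (auto simp: nth_eq_iff_index_eq)

lemma path_edge_nth_iff:
  assumes "distinct p" "i < length p" "j < length p"
  shows "path_edge p (p ! i) (p ! j) \<longleftrightarrow> j = Suc i \<or> i = Suc j"
  using assms unfolding path_edge_def by (auto simp: nth_eq_iff_index_eq)

lemma path_edge_rev: "path_edge (rev p) x y \<longleftrightarrow> path_edge p x y"
proof -
  have rev_edge: "path_edge (rev p) x y" if "path_edge p x y" for p :: "'a list"
  proof -
    from that obtain t where t: "Suc t < length p"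
      "(x = p ! t \<and> y = p ! Suc t) \<or> (x = p ! Suc t \<and> y = p ! t)"
      unfolding path_edge_def by blast
    define t' where "t' = length p - Suc (Suc t)"
    have "Suc t' < length (rev p)" "rev p ! t' = p ! Suc t" "rev p ! Suc t' = p ! t"
      using t(1) by (simp_all add: rev_nth t'_def Suc_diff_Suc)
    then show ?thesis unfolding path_edge_def using t(2) by metis
  qed
  show ?thesis using rev_edge[of p] rev_edge[of "rev p"] by auto
qed

definition induced_path :: "('a \<Rightarrow> 'a \<Rightarrow> bool) \<Rightarrow> 'a list \<Rightarrow> bool" where
  "induced_path E xs \<longleftrightarrow> distinct xs \<and>
     (\<forall>p<length xs. \<forall>q<length xs. E (xs ! p) (xs ! q) \<longleftrightarrow> q = Suc p \<or> p = Suc q)"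

lemma induced_pathD:
  "induced_path E xs \<Longrightarrow> p < length xs \<Longrightarrow> q < length xs \<Longrightarrow>
     E (xs ! p) (xs ! q) \<longleftrightarrow> q = Suc p \<or> p = Suc q"
  unfolding induced_path_def by blast

lemma induced_path_length_le_1:
  "length xs \<le> 1 \<Longrightarrow> (\<And>y. \<not> E y y) \<Longrightarrow> induced_path E xs"
  by (cases xs) (auto simp: induced_path_def)

lemma induced_path_tl:
  assumes "induced_path E xs"
  shows "induced_path E (tl xs)"
proof (cases xs)
  case Nil
  then show ?thesis using assms by simp
next
  case (Cons x ys)
  have "E (ys ! p) (ys ! q) \<longleftrightarrow> q = Suc p \<or> p = Suc q"
    if "p < length ys" "q < length ys" for p q
    using induced_pathD[OF assms, of "Suc p" "Suc q"] that Cons by simp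
  then show ?thesis using assms Cons by (simp add: induced_path_def)
qed

lemma induced_path_rev:
  assumes sym: "\<And>x y. E x y \<Longrightarrow> E y x" and "induced_path E xs"
  shows "induced_path E (rev xs)"
  unfolding induced_path_def
proof (intro conjI allI impI)
  show "distinct (rev xs)" using assms(2) by (simp add: induced_path_def)
  fix p q assume pq: "p < length (rev xs)" "q < length (rev xs)"
  let ?n = "length xs"
  have "E (rev xs ! p) (rev xs ! q) \<longleftrightarrow> E (xs ! (?n - Suc p)) (xs ! (?n - Suc q))"
    using pq by (simp add: rev_nth)
  also have "\<dots> \<longleftrightarrow> ?n - Suc q = Suc (?n - Suc p) \<or> ?n - Suc p = Suc (?n - Suc q)"
    using induced_pathD[OF assms(2)] pq by simp
  also have "\<dots> \<longleftrightarrow> q = Suc p \<or> p = Suc q" using pq by auto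
  finally show "E (rev xs ! p) (rev xs ! q) \<longleftrightarrow> q = Suc p \<or> p = Suc q" .
qed

lemma induced_path_append:
  assumes sym: "\<And>x y. E x y \<Longrightarrow> E y x"
    and xs: "induced_path E xs" and ys: "induced_path E ys" and disj: "set xs \<inter> set ys = {}"
    and link: "xs \<noteq> [] \<Longrightarrow> ys \<noteq> [] \<Longrightarrow> E (last xs) (hd ys)"
    and only_link: "\<And>x y. x \<in> set xs \<Longrightarrow> y \<in> set ys \<Longrightarrow> E x y \<Longrightarrow> x = last xs \<and> y = hd ys"
  shows "induced_path E (xs @ ys)"
proof (cases "xs = [] \<or> ys = []")
  case True
  then show ?thesis using xs ys by auto
next
  case False
  let ?a = "length xs"
  have dx: "distinct xs" and dy: "distinct ys" using xs ys by (auto simp: induced_path_def)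
  have cross: "E (xs ! p) (ys ! q) \<longleftrightarrow> p = ?a - 1 \<and> q = 0"
    if "p < ?a" "q < length ys" for p q
  proof
    assume "E (xs ! p) (ys ! q)"
    then have "xs ! p = xs ! (?a - 1)" "ys ! q = ys ! 0"
      using only_link[of "xs ! p" "ys ! q"] that False by (auto simp: last_conv_nth hd_conv_nth)
    then show "p = ?a - 1 \<and> q = 0" using that dx dy False by (auto simp: nth_eq_iff_index_eq)
  next
    assume "p = ?a - 1 \<and> q = 0"
    then show "E (xs ! p) (ys ! q)" using link False by (simp add: last_conv_nth hd_conv_nth)
  qed
  show ?thesis unfolding induced_path_def
  proof (intro conjI allI impI)
    show "distinct (xs @ ys)" using dx dy disj by auto
    fix p q assume pq: "p < length (xs @ ys)" "q < length (xs @ ys)"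
    consider "p < ?a" "q < ?a" | "p < ?a" "\<not> q < ?a" | "\<not> p < ?a" "q < ?a" | "\<not> p < ?a" "\<not> q < ?a"
      by blast
    then show "E ((xs @ ys) ! p) ((xs @ ys) ! q) \<longleftrightarrow> q = Suc p \<or> p = Suc q"
    proof cases
      case 1
      then show ?thesis using induced_pathD[OF xs] by (simp add: nth_append)
    next
      case 2
      then show ?thesis using pq cross[of p "q - ?a"] by (auto simp: nth_append)
    next
      case 3
      have "E ((xs @ ys) ! p) ((xs @ ys) ! q) \<longleftrightarrow> E (xs ! q) (ys ! (p - ?a))"
        using 3 sym by (auto simp: nth_append)
      then show ?thesis using 3 pq cross[of q "p - ?a"] by auto
    next
      case 4
      then show ?thesis using pq induced_pathD[OF ys, of "p - ?a" "q - ?a"] by (auto simp: nth_append)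
    qed
  qed
qed

lemma hole_insert_induced_path:
  assumes sym: "\<And>x y. E x y \<Longrightarrow> E y x" and irrefl: "\<not> E x0 x0"
    and ys: "induced_path E ys" and x0: "x0 \<notin> set ys" and len: "length ys \<ge> 3"
    and hd: "E x0 (hd ys)" and last: "E x0 (last ys)"
    and only_ends: "\<And>y. y \<in> set ys \<Longrightarrow> E x0 y \<Longrightarrow> y = hd ys \<or> y = last ys"
    and V: "insert x0 (set ys) \<subseteq> V"
  shows "hole V E (insert x0 (set ys))"
proof -
  let ?xs = "x0 # ys" and ?n = "Suc (length ys)"
  have dy: "distinct ys" using ys by (simp add: induced_path_def)
  have ne: "ys \<noteq> []" using len by auto
  have x0_nth: "E x0 (ys ! q) \<longleftrightarrow> q = 0 \<or> q = length ys - 1" if "q < length ys" for q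
  proof
    assume "E x0 (ys ! q)"
    then have "ys ! q = ys ! 0 \<or> ys ! q = ys ! (length ys - 1)"
      using only_ends[of "ys ! q"] that ne by (simp add: hd_conv_nth last_conv_nth)
    then show "q = 0 \<or> q = length ys - 1" using that ne dy by (auto simp: nth_eq_iff_index_eq)
  next
    assume "q = 0 \<or> q = length ys - 1"
    then show "E x0 (ys ! q)" using hd last ne by (auto simp: hd_conv_nth last_conv_nth)
  qed
  have mod_0: "0 = Suc q mod ?n \<longleftrightarrow> q = length ys" if "q < ?n" for q
    using that by (cases "Suc q = ?n") auto
  have mod_Suc: "Suc q' = Suc p mod ?n \<longleftrightarrow> q' = p" if "p < ?n" "Suc q' < ?n" for p q'
    using that by (cases "Suc p = ?n") auto
  have cyclic: "E (?xs ! p) (?xs ! q) \<longleftrightarrow> q = Suc p mod ?n \<or> p = Suc q mod ?n"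
    if pq: "p < ?n" "q < ?n" for p q
  proof (cases p; cases q)
    assume "p = 0" "q = 0"
    then show ?thesis using irrefl ne by simp
  next
    fix q' assume "p = 0" "q = Suc q'"
    then show ?thesis using x0_nth[of q'] pq len mod_0[of q] by auto
  next
    fix p' assume "p = Suc p'" "q = 0"
    then show ?thesis using x0_nth[of p'] pq len mod_0[of p] sym by auto
  next
    fix p' q' assume "p = Suc p'" "q = Suc q'"
    then show ?thesis
      using induced_pathD[OF ys, of p' q'] pq mod_Suc[of p q'] mod_Suc[of q p'] by auto
  qed
  show ?thesis unfolding hole_def
  proof (intro exI[of _ ?xs] conjI)
    show "\<forall>i<length ?xs. \<forall>j<length ?xs. E (?xs ! i) (?xs ! j) \<longleftrightarrow>
        j = Suc i mod length ?xs \<or> i = Suc j mod length ?xs"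
      using cyclic by (simp only: length_Cons) blast
  qed (use dy x0 len V in auto)
qed

section \<open>Graphs without induced P4 or C4\<close>

definition P4_C4_free :: "'a set \<Rightarrow> ('a \<Rightarrow> 'a \<Rightarrow> bool) \<Rightarrow> bool" where
  "P4_C4_free S R \<longleftrightarrow> \<not> (\<exists>p\<in>S. \<exists>q\<in>S. \<exists>r\<in>S. \<exists>s\<in>S. distinct [p, q, r, s] \<and>
     ((R p q \<and> R q r \<and> R r s \<and> \<not> R p r \<and> \<not> R q s \<and> \<not> R p s) \<or>
      (R p q \<and> R q r \<and> R r s \<and> R s p \<and> \<not> R p r \<and> \<not> R q s)))"

lemma threshold_graph_imp_P4_C4_free: "threshold_graph S R \<Longrightarrow> P4_C4_free S R"
  unfolding threshold_graph_def P4_C4_free_def by blast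

lemma P4_C4_free_cong:
  "P4_C4_free S R \<Longrightarrow> (\<And>x y. x \<in> S \<Longrightarrow> y \<in> S \<Longrightarrow> R x y \<longleftrightarrow> R' x y) \<Longrightarrow> P4_C4_free S R'"
  unfolding P4_C4_free_def by (smt (verit))

lemma P4_C4_free_insert_universal:
  assumes "P4_C4_free S R" and "\<And>x. x \<in> S \<Longrightarrow> x \<noteq> z \<Longrightarrow> R z x \<and> R x z"
  shows "P4_C4_free (insert z S) R"
  unfolding P4_C4_free_def
proof
  assume "\<exists>p\<in>insert z S. \<exists>q\<in>insert z S. \<exists>r\<in>insert z S. \<exists>s\<in>insert z S. distinct [p, q, r, s] \<and>
     ((R p q \<and> R q r \<and> R r s \<and> \<not> R p r \<and> \<not> R q s \<and> \<not> R p s) \<or>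
      (R p q \<and> R q r \<and> R r s \<and> R s p \<and> \<not> R p r \<and> \<not> R q s))"
  then obtain p q r s where pqrs: "p \<in> insert z S" "q \<in> insert z S" "r \<in> insert z S" "s \<in> insert z S"
    "distinct [p, q, r, s]" "(R p q \<and> R q r \<and> R r s \<and> \<not> R p r \<and> \<not> R q s \<and> \<not> R p s) \<or>
      (R p q \<and> R q r \<and> R r s \<and> R s p \<and> \<not> R p r \<and> \<not> R q s)"
    by blast
  \<comment> \<open>each of p, q, r, s has a non-neighbour among the others, so none of them is z\<close>
  have "p \<noteq> z" "q \<noteq> z" "r \<noteq> z" "s \<noteq> z"
    using pqrs assms(2)[of r] assms(2)[of s] assms(2)[of p] assms(2)[of q] by auto
  then show False using pqrs assms(1) unfolding P4_C4_free_def by blast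
qed

lemma P4_C4_free_split_graph:
  fixes n m :: nat and a c :: "nat \<Rightarrow> 'a" and R :: "nat \<Rightarrow> nat \<Rightarrow> bool"
  defines "AE \<equiv> \<lambda>x y. (\<exists>j<m. \<exists>j'<m. j \<noteq> j' \<and> x = c j \<and> y = c j') \<or>
                     (\<exists>i<n. \<exists>j<m. R i j \<and> ((x = a i \<and> y = c j) \<or> (x = c j \<and> y = a i)))"
  assumes inj_a: "inj_on a {..<n}" and inj_c: "inj_on c {..<m}"
    and disj: "a ` {..<n} \<inter> c ` {..<m} = {}"
    and no_2K2: "\<not> (\<exists>i<n. \<exists>i'<n. \<exists>j<m. \<exists>j'<m. R i j \<and> R i' j' \<and> \<not> R i j' \<and> \<not> R i' j)"
  shows "P4_C4_free (a ` {..<n} \<union> c ` {..<m}) AE"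
proof -
  let ?Cs = "c ` {..<m}" and ?As = "a ` {..<n}"
  have a_ne_c: "a i \<noteq> c j" if "i < n" "j < m" for i j using disj that by blast
  have edge_meets_C: "x \<in> ?Cs \<or> y \<in> ?Cs" if "AE x y" for x y using that unfolding AE_def by blast
  have C_clique: "AE x y" if "x \<in> ?Cs" "y \<in> ?Cs" "x \<noteq> y" for x y
    using that unfolding AE_def by blast
  have AE_a_c: "AE (a i) (c j) \<longleftrightarrow> R i j" "AE (c j) (a i) \<longleftrightarrow> R i j" if "i < n" "j < m" for i j
  proof -
    have "AE (a i) (c j) \<longleftrightarrow> (\<exists>i'<n. \<exists>j'<m. R i' j' \<and> a i = a i' \<and> c j = c j')"
      "AE (c j) (a i) \<longleftrightarrow> (\<exists>i'<n. \<exists>j'<m. R i' j' \<and> a i = a i' \<and> c j = c j')"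
      using a_ne_c that unfolding AE_def by blast+
    moreover have "a i = a i' \<longleftrightarrow> i = i'" if "i' < n" for i'
      using inj_a that \<open>i < n\<close> by (auto dest: inj_onD)
    moreover have "c j = c j' \<longleftrightarrow> j = j'" if "j' < m" for j'
      using inj_c that \<open>j < m\<close> by (auto dest: inj_onD)
    ultimately show "AE (a i) (c j) \<longleftrightarrow> R i j" "AE (c j) (a i) \<longleftrightarrow> R i j" using that by auto
  qed
  \<comment> \<open>in an induced P4 or C4 p-q-r-s the middle vertices q, r lie in the clique and p, s do not\<close>
  have middle: "q \<in> ?Cs \<and> r \<in> ?Cs \<and> p \<notin> ?Cs \<and> s \<notin> ?Cs"
    if "distinct [p, q, r, s]" "AE p q" "AE q r" "AE r s" "\<not> AE p r" "\<not> AE q s" for p q r s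
  proof -
    have "q \<in> ?Cs" using edge_meets_C[OF that(2)] edge_meets_C[OF that(3)] C_clique that(1,5) by auto
    moreover have "r \<in> ?Cs" using edge_meets_C[OF that(4)] C_clique that(1,6) calculation by auto
    ultimately show ?thesis using C_clique that(1,5,6) by auto
  qed
  show ?thesis unfolding P4_C4_free_def
  proof (intro notI, elim bexE conjE disjE)
    fix p q r s assume inS: "p \<in> ?As \<union> ?Cs" "s \<in> ?As \<union> ?Cs" and dist: "distinct [p, q, r, s]"
      and e: "AE p q" "AE q r" "AE r s" "\<not> AE p r" "\<not> AE q s" "\<not> AE p s"
    obtain i i' j j' where "i < n" "p = a i" "i' < n" "s = a i'" "j < m" "q = c j" "j' < m" "r = c j'"
      using middle[OF dist e(1-5)] inS by blast
    then have "R i j" "R i' j'" "\<not> R i j'" "\<not> R i' j" using AE_a_c e by simp_all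
    then show False using no_2K2 \<open>i < n\<close> \<open>i' < n\<close> \<open>j < m\<close> \<open>j' < m\<close> by blast
  next
    fix p q r s assume dist: "distinct [p, q, r, s]"
      and e: "AE p q" "AE q r" "AE r s" "AE s p" "\<not> AE p r" "\<not> AE q s"
    then show False using middle[OF dist e(1-3) e(5,6)] edge_meets_C[OF e(4)] by blast
  qed
qed

lemma threshold_graph_disconnected_imp_isolated:
  assumes thr: "threshold_graph S R" and disconn: "\<not> connected_graph S R" and "S \<noteq> {}"
    and sym: "\<And>x y. R x y \<Longrightarrow> R y x" and irrefl: "\<And>x. \<not> R x x"
  shows "\<exists>x\<in>S. \<forall>y\<in>S. \<not> R x y"
proof (rule ccontr)
  assume "\<not> ?thesis"
  then have nbr: "\<forall>x\<in>S. \<exists>y\<in>S. R x y" by blast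
  define Rel where "Rel = (\<lambda>u v. u \<in> S \<and> v \<in> S \<and> R u v)"
  have Rel_sym: "Rel u v \<Longrightarrow> Rel v u" for u v using sym by (auto simp: Rel_def)
  from disconn obtain x y where xy: "x \<in> S" "y \<in> S" "\<not> Rel\<^sup>*\<^sup>* x y"
    unfolding connected_graph_def Rel_def using \<open>S \<noteq> {}\<close> by blast
  obtain x' y' where x'y': "x' \<in> S" "y' \<in> S" "R x x'" "R y y'" using nbr xy by blast
  then have "Rel x x'" "Rel y' y" using xy Rel_sym by (auto simp: Rel_def)
  \<comment> \<open>the edges x x' and y y' lie in different components, so they form an induced 2K2\<close>
  then have "Rel\<^sup>*\<^sup>* x u" "Rel\<^sup>*\<^sup>* v y" if "u \<in> {x, x'}" "v \<in> {y, y'}" for u v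
    using that by auto
  then have apart: "\<not> Rel\<^sup>*\<^sup>* u v" if "u \<in> {x, x'}" "v \<in> {y, y'}" for u v
    using that xy(3) by (meson rtranclp_trans)
  have "x \<noteq> y" "x \<noteq> y'" "x' \<noteq> y" "x' \<noteq> y'"
    using apart[of x y] apart[of x y'] apart[of x' y] apart[of x' y'] by auto
  moreover have "x \<noteq> x'" "y \<noteq> y'" using irrefl x'y'(3,4) by metis+
  ultimately have "distinct [x, x', y, y']" by simp
  moreover have "\<not> R x y" "\<not> R x y'" "\<not> R x' y" "\<not> R x' y'"
    using apart[of x y] apart[of x y'] apart[of x' y] apart[of x' y'] xy x'y' by (auto simp: Rel_def)
  ultimately show False using thr xy(1,2) x'y' sym unfolding threshold_graph_def by blast
qed

section \<open>Holes and their equivalence\<close>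

lemma hole_finite: "hole V E C \<Longrightarrow> finite C"
  unfolding hole_def by auto

lemma hole_subset: "hole V E C \<Longrightarrow> C \<subseteq> V"
  unfolding hole_def by auto

lemma hole_two_neighbours:
  assumes "hole V E C" "v \<in> C"
  shows "\<exists>u w. u \<noteq> w \<and> u \<in> C \<and> w \<in> C \<and> E v u \<and> E v w"
proof -
  obtain xs where xs: "distinct xs" "length xs \<ge> 4" "set xs = C"
    "\<forall>i<length xs. \<forall>j<length xs. E (xs ! i) (xs ! j) \<longleftrightarrow> j = Suc i mod length xs \<or> i = Suc j mod length xs"
    using assms(1) unfolding hole_def by blast
  let ?n = "length xs"
  obtain t where t: "t < ?n" "v = xs ! t" using assms(2) xs(3) by (metis in_set_conv_nth)
  define succ where "succ = (if Suc t = ?n then 0 else Suc t)"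
  define pred where "pred = (if t = 0 then ?n - 1 else t - 1)"
  have succ: "succ < ?n" "succ = Suc t mod ?n" and pred: "pred < ?n" "t = Suc pred mod ?n"
    using t xs(2) by (auto simp: succ_def pred_def)
  have "succ \<noteq> pred" using t xs(2) by (auto simp: succ_def pred_def)
  then have "xs ! succ \<noteq> xs ! pred" using succ pred xs(1) by (simp add: nth_eq_iff_index_eq)
  moreover have "xs ! succ \<in> C" "xs ! pred \<in> C" using succ pred xs(3) by auto
  moreover have "E v (xs ! succ)" "E v (xs ! pred)" using xs(4) t succ pred by blast+
  ultimately show ?thesis by blast
qed

lemma hole_not_subset_P4_C4_free:
  assumes "hole V E C" "P4_C4_free X E"
  shows "\<not> C \<subseteq> X"
proof
  assume "C \<subseteq> X"
  obtain xs where xs: "distinct xs" "length xs \<ge> 4" "set xs = C"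
    "\<forall>i<length xs. \<forall>j<length xs. E (xs ! i) (xs ! j) \<longleftrightarrow> j = Suc i mod length xs \<or> i = Suc j mod length xs"
    using assms(1) unfolding hole_def by blast
  let ?n = "length xs"
  have E_nth: "E (xs ! i) (xs ! j) \<longleftrightarrow> j = Suc i mod ?n \<or> i = Suc j mod ?n"
    if "i < ?n" "j < ?n" for i j using xs(4) that by blast
  have n: "0 < ?n" "1 < ?n" "2 < ?n" "3 < ?n" using xs(2) by linarith+
  have mod_n: "Suc 0 mod ?n = 1" "Suc 1 mod ?n = 2" "Suc 2 mod ?n = 3"
    "Suc 3 mod ?n = (if ?n = 4 then 0 else 4)" using xs(2) by auto
  \<comment> \<open>the first four vertices of the hole induce a C4 if the hole has length 4, and a P4 otherwise\<close>
  have "E (xs ! 0) (xs ! 1)" "E (xs ! 1) (xs ! 2)" "E (xs ! 2) (xs ! 3)"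
    "\<not> E (xs ! 0) (xs ! 2)" "\<not> E (xs ! 1) (xs ! 3)"
    "E (xs ! 3) (xs ! 0) \<longleftrightarrow> ?n = 4" "E (xs ! 0) (xs ! 3) \<longleftrightarrow> ?n = 4"
    using E_nth[of 0 1] E_nth[of 1 2] E_nth[of 2 3] E_nth[of 0 2] E_nth[of 1 3] E_nth[of 3 0] E_nth[of 0 3]
      n mod_n by auto
  moreover have "distinct [xs ! 0, xs ! 1, xs ! 2, xs ! 3]"
    using xs(1) n by (auto simp: nth_eq_iff_index_eq)
  moreover have "xs ! 0 \<in> X" "xs ! 1 \<in> X" "xs ! 2 \<in> X" "xs ! 3 \<in> X"
    using \<open>C \<subseteq> X\<close> xs(3) n by auto
  ultimately show False using assms(2) unfolding P4_C4_free_def by (cases "?n = 4") blast+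
qed

lemma holes_close_if_subset:
  assumes "hole V E X" "S \<subseteq> X \<inter> Y" "finite S" "card S \<ge> 4"
  shows "holes_close X Y"
proof -
  have "card S \<le> card (X \<inter> Y)" using hole_finite[OF assms(1)] assms(2) by (intro card_mono) auto
  then show ?thesis using assms(4) unfolding holes_close_def by simp
qed

lemma holes_equivalent_if_close:
  "hole V E X \<Longrightarrow> hole V E Y \<Longrightarrow> holes_close X Y \<Longrightarrow> holes_equivalent V E X Y"
  unfolding holes_equivalent_def by auto

lemma holes_equivalent_trans:
  "holes_equivalent V E X Y \<Longrightarrow> holes_equivalent V E Y Z \<Longrightarrow> holes_equivalent V E X Z"
  unfolding holes_equivalent_def by (rule rtranclp_trans)

lemma holes_equivalent_sym: "holes_equivalent V E X Y \<Longrightarrow> holes_equivalent V E Y X"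
  unfolding holes_equivalent_def
proof (induction rule: rtranclp_induct)
  case (step Y Z)
  then have "(\<lambda>X Y. hole V E X \<and> hole V E Y \<and> holes_close X Y) Z Y"
    unfolding holes_close_def by (simp add: Int_commute)
  then show ?case using step(3) by (rule converse_rtranclp_into_rtranclp)
qed simp

lemma second_change_on_cycle:
  fixes f :: "nat \<Rightarrow> bool"
  assumes "f n = f 0" "t0 < n" "f t0 \<noteq> f (Suc t0)"
  shows "\<exists>t1<n. t1 \<noteq> t0 \<and> f t1 \<noteq> f (Suc t1)"
proof (rule ccontr)
  assume "\<not> ?thesis"
  then have const: "\<And>t. t < n \<Longrightarrow> t \<noteq> t0 \<Longrightarrow> f t = f (Suc t)" by blast
  have "j \<le> t0 \<Longrightarrow> f j = f 0" for j
    by (induction j) (use const assms(2) in auto)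
  moreover have "Suc t0 + d \<le> n \<Longrightarrow> f (Suc t0 + d) = f (Suc t0)" for d
    by (induction d) (use const in auto)
  ultimately show False using assms by (metis Suc_leI le_add_diff_inverse order_refl)
qed

lemma cyclic_edges_distinct:
  assumes "distinct xs" "3 \<le> length xs" "t0 < length xs" "t1 < length xs" "t0 \<noteq> t1"
  shows "{xs ! t0, xs ! (Suc t0 mod length xs)} \<noteq> {xs ! t1, xs ! (Suc t1 mod length xs)}"
proof
  let ?n = "length xs"
  assume eq: "{xs ! t0, xs ! (Suc t0 mod ?n)} = {xs ! t1, xs ! (Suc t1 mod ?n)}"
  have "xs ! t0 \<noteq> xs ! t1" using assms by (simp add: nth_eq_iff_index_eq)
  then have "xs ! (Suc t0 mod ?n) = xs ! t1" "xs ! (Suc t1 mod ?n) = xs ! t0"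
    using eq by (auto simp: doubleton_eq_iff)
  moreover have "Suc t0 mod ?n < ?n" "Suc t1 mod ?n < ?n"
    using assms(3) by (intro mod_less_divisor, linarith)+
  ultimately have "Suc t0 mod ?n = t1" "Suc t1 mod ?n = t0"
    using nth_eq_iff_index_eq[OF assms(1)] assms(3,4) by blast+
  then show False using assms(2-4) by (auto simp: mod_if split: if_splits)
qed

section \<open>Disjoint paths between two sides without induced P4 or C4\<close>

locale two_sided_paths =
  fixes V :: "'a set" and E :: "'a \<Rightarrow> 'a \<Rightarrow> bool" and I :: "'i set"
    and P :: "'i \<Rightarrow> 'a list" and S T :: "'a set"
  assumes E_sym: "\<And>x y. E x y \<Longrightarrow> E y x"
    and E_irrefl: "\<And>x. \<not> E x x"
    and P_distinct: "\<And>r. r \<in> I \<Longrightarrow> distinct (P r)"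
    and P_length: "\<And>r. r \<in> I \<Longrightarrow> length (P r) \<ge> 3"
    and P_disjoint: "\<And>r r'. r \<in> I \<Longrightarrow> r' \<in> I \<Longrightarrow> r \<noteq> r' \<Longrightarrow> set (P r) \<inter> set (P r') = {}"
    and S_T_disjoint: "S \<inter> T = {}"
    and S_inter_P: "\<And>r. r \<in> I \<Longrightarrow> S \<inter> set (P r) = {hd (P r)}"
    and T_inter_P: "\<And>r. r \<in> I \<Longrightarrow> T \<inter> set (P r) = {last (P r)}"
    and V_subset: "V \<subseteq> S \<union> T \<union> (\<Union>r\<in>I. set (P r))"
    and P_subset_V: "\<And>r. r \<in> I \<Longrightarrow> set (P r) \<subseteq> V"
    and path_edge_imp_E: "\<And>r x y. r \<in> I \<Longrightarrow> path_edge (P r) x y \<Longrightarrow> E x y"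
    and E_cases: "\<And>x y. E x y \<Longrightarrow> (\<exists>r\<in>I. path_edge (P r) x y) \<or> (x \<in> S \<and> y \<in> S) \<or> (x \<in> T \<and> y \<in> T)"
    and S_P4_C4_free: "P4_C4_free S E" and T_P4_C4_free: "P4_C4_free T E"
begin

lemma P_index_unique: "r \<in> I \<Longrightarrow> r' \<in> I \<Longrightarrow> x \<in> set (P r) \<Longrightarrow> x \<in> set (P r') \<Longrightarrow> r = r'"
  using P_disjoint by blast

lemma hd_P_nth: "r \<in> I \<Longrightarrow> hd (P r) = P r ! 0"
  using P_length[of r] by (intro hd_conv_nth) auto

lemma last_P_nth: "r \<in> I \<Longrightarrow> last (P r) = P r ! (length (P r) - 1)"
  using P_length[of r] by (intro last_conv_nth) auto

lemma hd_P_mem: "r \<in> I \<Longrightarrow> hd (P r) \<in> set (P r)"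
  using S_inter_P by blast

lemma hd_P_in_S: "r \<in> I \<Longrightarrow> hd (P r) \<in> S"
  using S_inter_P by blast

lemma last_P_in_T: "r \<in> I \<Longrightarrow> last (P r) \<in> T"
  using T_inter_P by blast

lemma in_S_imp_hd_P: "r \<in> I \<Longrightarrow> x \<in> S \<Longrightarrow> x \<in> set (P r) \<Longrightarrow> x = hd (P r)"
  using S_inter_P by blast

lemma in_T_imp_last_P: "r \<in> I \<Longrightarrow> x \<in> T \<Longrightarrow> x \<in> set (P r) \<Longrightarrow> x = last (P r)"
  using T_inter_P by blast

lemma hd_P_ne_last_P: "r \<in> I \<Longrightarrow> hd (P r) \<noteq> last (P r)"
  using hd_P_in_S[of r] last_P_in_T[of r] S_T_disjoint by auto

lemma interior_not_in_S_T:
  assumes "r \<in> I" "0 < s" "s < length (P r) - 1"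
  shows "P r ! s \<notin> S" "P r ! s \<notin> T"
proof -
  have "s < length (P r)" "0 < length (P r)" using assms(3) by linarith+
  then have "P r ! s \<in> set (P r)" "P r ! s \<noteq> hd (P r)" "P r ! s \<noteq> last (P r)"
    using assms P_distinct[OF assms(1)]
    by (auto simp: hd_P_nth last_P_nth nth_eq_iff_index_eq)
  then show "P r ! s \<notin> S" "P r ! s \<notin> T"
    using in_S_imp_hd_P[OF assms(1)] in_T_imp_last_P[OF assms(1)] by blast+
qed

lemma interior_neighbour:
  assumes "r \<in> I" "0 < s" "s < length (P r) - 1" "E (P r ! s) y"
  shows "y = P r ! (s - 1) \<or> y = P r ! Suc s"
proof -
  obtain r' where r': "r' \<in> I" "path_edge (P r') (P r ! s) y"
    using E_cases[OF assms(4)] interior_not_in_S_T[OF assms(1-3)] by blast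
  have "r' = r" using P_index_unique[OF r'(1) assms(1)] path_edge_mem[OF r'(2)] assms by auto
  with r' obtain t where t: "Suc t < length (P r)"
    "(P r ! s = P r ! t \<and> y = P r ! Suc t) \<or> (P r ! s = P r ! Suc t \<and> y = P r ! t)"
    unfolding path_edge_def by blast
  then have "(s = t \<and> y = P r ! Suc t) \<or> (s = Suc t \<and> y = P r ! t)"
    using P_distinct[OF assms(1)] assms(3) by (auto simp: nth_eq_iff_index_eq)
  then show ?thesis by auto
qed

lemma edge_leaving_path:
  assumes "r \<in> I" "x \<in> set (P r)" "y \<notin> set (P r)" "E x y"
  shows "(x = hd (P r) \<and> y \<in> S) \<or> (x = last (P r) \<and> y \<in> T)"
proof -
  have "\<not> path_edge (P r') x y" if "r' \<in> I" for r'
    using P_index_unique[of r r' x] path_edge_mem[of "P r'" x y] assms that by auto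
  then have "(x \<in> S \<and> y \<in> S) \<or> (x \<in> T \<and> y \<in> T)" using E_cases[OF assms(4)] by blast
  then show ?thesis using in_S_imp_hd_P[OF assms(1) _ assms(2)] in_T_imp_last_P[OF assms(1) _ assms(2)] by blast
qed

lemma induced_path_P:
  assumes r: "r \<in> I"
  shows "induced_path E (P r)"
  unfolding induced_path_def
proof (intro conjI allI impI)
  show "distinct (P r)" using P_distinct[OF r] .
  fix p q assume pq: "p < length (P r)" "q < length (P r)"
  have "E (P r ! p) (P r ! q) \<longleftrightarrow> path_edge (P r) (P r ! p) (P r ! q)"
  proof
    assume e: "E (P r ! p) (P r ! q)"
    then have ne: "P r ! p \<noteq> P r ! q" using E_irrefl by metis
    have mem: "P r ! p \<in> set (P r)" "P r ! q \<in> set (P r)" using pq by auto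
    have "\<not> (P r ! p \<in> S \<and> P r ! q \<in> S)" "\<not> (P r ! p \<in> T \<and> P r ! q \<in> T)"
      using in_S_imp_hd_P[OF r] in_T_imp_last_P[OF r] mem ne by metis+
    then obtain r' where "r' \<in> I" "path_edge (P r') (P r ! p) (P r ! q)" using E_cases[OF e] by blast
    moreover then have "r' = r" using P_index_unique[OF _ r] path_edge_mem mem by metis
    ultimately show "path_edge (P r) (P r ! p) (P r ! q)" by simp
  qed (rule path_edge_imp_E[OF r])
  also have "\<dots> \<longleftrightarrow> q = Suc p \<or> p = Suc q" using path_edge_nth_iff[OF P_distinct[OF r] pq] .
  finally show "E (P r ! p) (P r ! q) \<longleftrightarrow> q = Suc p \<or> p = Suc q" .
qed

lemma hole_contains_path_if_interior:
  assumes C: "hole V E C" and r: "r \<in> I" and s: "0 < s" "s < length (P r) - 1" "P r ! s \<in> C"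
  shows "set (P r) \<subseteq> C"
proof -
  let ?L = "length (P r)"
  \<comment> \<open>an interior vertex of a path has only its two path neighbours, and both must lie on the hole\<close>
  have step: "P r ! (j - 1) \<in> C \<and> P r ! Suc j \<in> C" if j: "0 < j" "j < ?L - 1" "P r ! j \<in> C" for j
  proof -
    obtain u w where uw: "u \<noteq> w" "u \<in> C" "w \<in> C" "E (P r ! j) u" "E (P r ! j) w"
      using hole_two_neighbours[OF C j(3)] by blast
    then show ?thesis using interior_neighbour[OF r j(1,2)] by metis
  qed
  have up: "s + d < ?L \<Longrightarrow> P r ! (s + d) \<in> C" for d
    by (induction d) (use s step in auto)
  have down: "d \<le> s \<Longrightarrow> P r ! (s - d) \<in> C" for d
  proof (induction d)
    case (Suc d)
    then have "P r ! (s - d) \<in> C" by simp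
    moreover have "s - d - 1 = s - Suc d" by simp
    ultimately show ?case using step[of "s - d"] s Suc.prems by simp
  qed (use s in simp)
  show ?thesis
  proof
    fix x assume "x \<in> set (P r)"
    then obtain j where j: "j < ?L" "x = P r ! j" by (metis in_set_conv_nth)
    show "x \<in> C"
      using up[of "j - s"] down[of "s - j"] j by (cases "s \<le> j") simp_all
  qed
qed

lemma interior_if_not_in_S_T:
  assumes "x \<in> V" "x \<notin> S" "x \<notin> T"
  shows "\<exists>r\<in>I. \<exists>s. 0 < s \<and> s < length (P r) - 1 \<and> x = P r ! s"
proof -
  obtain r where r: "r \<in> I" "x \<in> set (P r)" using assms V_subset by blast
  then obtain s where s: "s < length (P r)" "x = P r ! s" by (metis in_set_conv_nth)
  have "s \<noteq> 0" using s assms(2) hd_P_in_S[OF r(1)] hd_P_nth[OF r(1)] by (cases "s = 0") auto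
  moreover have "s \<noteq> length (P r) - 1" using s assms(3) last_P_in_T[OF r(1)] last_P_nth[OF r(1)] by auto
  ultimately have "0 < s \<and> s < length (P r) - 1" using s(1) by linarith
  then show ?thesis using r(1) s(2) by blast
qed

lemma edge_leaving_S:
  assumes "E x y" "x \<in> S" "y \<notin> S"
  shows "\<exists>r\<in>I. x = P r ! 0 \<and> y = P r ! 1"
proof -
  have "x \<notin> T" using assms(2) S_T_disjoint by blast
  then obtain r where r: "r \<in> I" "path_edge (P r) x y" using E_cases[OF assms(1)] assms by blast
  have x0: "x = P r ! 0" using in_S_imp_hd_P[OF r(1) assms(2)] path_edge_mem[OF r(2)] hd_P_nth[OF r(1)] by simp
  have len: "0 < length (P r)" using P_length[OF r(1)] by linarith
  obtain t where t: "Suc t < length (P r)"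
    "(x = P r ! t \<and> y = P r ! Suc t) \<or> (x = P r ! Suc t \<and> y = P r ! t)"
    using r(2) unfolding path_edge_def by blast
  from t(2) show ?thesis
  proof
    assume xy: "x = P r ! t \<and> y = P r ! Suc t"
    then have "t = 0" using x0 nth_eq_iff_index_eq[OF P_distinct[OF r(1)], of t 0] t(1) len by auto
    then show ?thesis using xy x0 r(1) by auto
  next
    assume "x = P r ! Suc t \<and> y = P r ! t"
    then have "Suc t = 0" using x0 nth_eq_iff_index_eq[OF P_distinct[OF r(1)], of "Suc t" 0] t(1) len by auto
    then show ?thesis by simp
  qed
qed

lemma hole_edge_leaving_S:
  assumes C: "hole V E C" and "x \<in> C" "y \<in> C" "E x y" "x \<in> S" "y \<notin> S"
  shows "\<exists>r\<in>I. x = P r ! 0 \<and> y = P r ! 1 \<and> set (P r) \<subseteq> C"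
proof -
  obtain r where r: "r \<in> I" "x = P r ! 0" "y = P r ! 1" using edge_leaving_S assms(4-6) by blast
  moreover have "1 < length (P r) - 1" using P_length[OF r(1)] by linarith
  ultimately have "set (P r) \<subseteq> C" using hole_contains_path_if_interior[OF C r(1), of 1] assms(3) by simp
  then show ?thesis using r by blast
qed

lemma hole_meets_S:
  assumes C: "hole V E C"
  shows "C \<inter> S \<noteq> {}"
proof
  assume disj: "C \<inter> S = {}"
  obtain x where x: "x \<in> C" "x \<notin> T" using hole_not_subset_P4_C4_free[OF C T_P4_C4_free] by blast
  then obtain r s where rs: "r \<in> I" "0 < s" "s < length (P r) - 1" "x = P r ! s"
    using interior_if_not_in_S_T hole_subset[OF C] disj by blast
  then have "hd (P r) \<in> C" using hole_contains_path_if_interior[OF C] hd_P_mem x(1) by blast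
  then show False using hd_P_in_S[OF rs(1)] disj by blast
qed

lemma hole_contains_two_paths:
  assumes C: "hole V E C"
  shows "\<exists>r\<in>I. \<exists>r'\<in>I. r \<noteq> r' \<and> set (P r) \<subseteq> C \<and> set (P r') \<subseteq> C"
proof -
  obtain xs where xs: "distinct xs" "length xs \<ge> 4" "set xs = C"
    "\<forall>i<length xs. \<forall>j<length xs. E (xs ! i) (xs ! j) \<longleftrightarrow> j = Suc i mod length xs \<or> i = Suc j mod length xs"
    using C unfolding hole_def by blast
  let ?n = "length xs"
  define g where "g t = (xs ! (t mod ?n) \<in> S)" for t
  \<comment> \<open>walking around the hole, membership in S changes exactly where the hole runs along the
      first edge of a path\<close>
  have change: "\<exists>r\<in>I. set (P r) \<subseteq> C \<and> {xs ! t, xs ! (Suc t mod ?n)} = {P r ! 0, P r ! 1}"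
    if t: "t < ?n" "g t \<noteq> g (Suc t)" for t
  proof -
    let ?x = "xs ! t" and ?y = "xs ! (Suc t mod ?n)"
    have succ: "Suc t mod ?n < ?n" using t(1) by (intro mod_less_divisor) linarith
    have in_C: "?x \<in> C" "?y \<in> C" using t(1) succ xs(3) by (auto intro!: nth_mem)
    have "E ?x ?y" using xs(4) t(1) succ by simp
    moreover have "?x \<in> S \<longleftrightarrow> ?y \<notin> S" using t by (simp add: g_def)
    ultimately show ?thesis
      using hole_edge_leaving_S[OF C in_C] hole_edge_leaving_S[OF C in_C(2,1)] E_sym
      by (cases "?x \<in> S") (metis insert_commute)+
  qed
  have "\<exists>t0<?n. g t0 \<noteq> g (Suc t0)"
  proof (rule ccontr)
    assume "\<not> ?thesis"
    then have "g t = g 0" if "t < ?n" for t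
      using that by (induction t) auto
    then have "(\<forall>t<?n. xs ! t \<in> S) \<or> (\<forall>t<?n. xs ! t \<notin> S)" by (auto simp: g_def)
    then have "C \<subseteq> S \<or> C \<inter> S = {}" using xs(3) by (auto simp: in_set_conv_nth)
    then show False using hole_not_subset_P4_C4_free[OF C S_P4_C4_free] hole_meets_S[OF C] by blast
  qed
  then obtain t0 where t0: "t0 < ?n" "g t0 \<noteq> g (Suc t0)" by blast
  moreover have "g ?n = g 0" by (simp add: g_def)
  ultimately obtain t1 where t1: "t1 < ?n" "t1 \<noteq> t0" "g t1 \<noteq> g (Suc t1)"
    using second_change_on_cycle by blast
  obtain r0 where r0: "r0 \<in> I" "set (P r0) \<subseteq> C" "{xs ! t0, xs ! (Suc t0 mod ?n)} = {P r0 ! 0, P r0 ! 1}"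
    using change[OF t0] by blast
  obtain r1 where r1: "r1 \<in> I" "set (P r1) \<subseteq> C" "{xs ! t1, xs ! (Suc t1 mod ?n)} = {P r1 ! 0, P r1 ! 1}"
    using change[OF t1(1,3)] by blast
  have "r0 \<noteq> r1"
    using r0(3) r1(3) cyclic_edges_distinct[OF xs(1) _ t0(1) t1(1) t1(2)[symmetric]] xs(2) by auto
  then show ?thesis using r0 r1 by blast
qed

lemma holes_close_if_common_path:
  assumes "hole V E X" "r \<in> I" "set (P r) \<subseteq> X \<inter> Y" "v \<in> X \<inter> Y" "v \<notin> set (P r)"
  shows "holes_close X Y"
proof -
  have "card (insert v (set (P r))) = Suc (length (P r))"
    using assms(5) distinct_card[OF P_distinct[OF assms(2)]] by simp
  then show ?thesis
    using holes_close_if_subset[OF assms(1), of "insert v (set (P r))"] P_length[OF assms(2)] assms(3,4)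
    by simp
qed

lemma holes_close_if_two_common_paths:
  assumes "hole V E X" "r \<in> I" "r' \<in> I" "r \<noteq> r'" "set (P r) \<subseteq> X \<inter> Y" "set (P r') \<subseteq> X \<inter> Y"
  shows "holes_close X Y"
  using holes_close_if_common_path[OF assms(1,2,5), of "hd (P r')"] P_disjoint[OF assms(2-4)]
    hd_P_mem[OF assms(3)] assms(6) by blast

lemma holes_equivalent_if_two_path_holes_equivalent:
  assumes hub: "\<And>r r' X. r \<in> I \<Longrightarrow> r' \<in> I \<Longrightarrow> r \<noteq> r' \<Longrightarrow> hole V E X \<Longrightarrow>
      set (P r) \<subseteq> X \<Longrightarrow> set (P r') \<subseteq> X \<Longrightarrow> holes_equivalent V E X K"
    and "hole V E C" "hole V E C'"
  shows "holes_equivalent V E C C'"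
  using hole_contains_two_paths[OF assms(2)] hole_contains_two_paths[OF assms(3)]
    hub[OF _ _ _ assms(2)] hub[OF _ _ _ assms(3)] holes_equivalent_sym holes_equivalent_trans by metis


text \<open>The lists \<open>ms\<close> and \<open>mt\<close> below are connectors of length at most one between the two
  S-ends and the two T-ends of a pair of paths; an empty connector means the two ends are adjacent.\<close>

lemma induced_path_joined_at_T:
  assumes r: "r \<in> I" "r' \<in> I" "r \<noteq> r'"
    and mt: "length mt \<le> 1" "set mt \<subseteq> T" "set mt \<inter> set (P r) = {}" "set mt \<inter> set (P r') = {}"
    and T0: "mt = [] \<Longrightarrow> E (last (P r)) (last (P r'))"
    and T1: "\<And>y. mt = [y] \<Longrightarrow> E (last (P r)) y \<and> E y (last (P r')) \<and> \<not> E (last (P r)) (last (P r'))"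
  shows "induced_path E (tl (P r) @ mt @ rev (P r'))"
proof -
  let ?p = "P r" and ?q = "P r'"
  define tp where "tp = tl ?p"
  have tp_sub: "set tp \<subseteq> set ?p" unfolding tp_def by (cases ?p) auto
  have tp: "tp \<noteq> []" "last tp = last ?p" "hd ?p \<notin> set tp"
    using P_length[OF r(1)] P_distinct[OF r(1)] unfolding tp_def
    by (cases ?p; cases "tl ?p"; auto)+
  have tp_not_S: "y \<notin> S" if "y \<in> set tp" for y
    using that tp(3) tp_sub in_S_imp_hd_P[OF r(1)] by blast
  have mt_cases: "mt = [] \<or> (\<exists>y. mt = [y])" using mt(1) by (cases mt) auto
  have mt_not_S: "y \<notin> S" if "y \<in> set mt" for y using that mt(2) S_T_disjoint by blast
  have q_ne: "?q \<noteq> []" using P_length[OF r(2)] by auto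
  have last_Y1: "last (tp @ mt) = (if mt = [] then last ?p else hd mt)"
    using mt_cases tp by auto
  have Y1: "induced_path E (tp @ mt)"
  proof (rule induced_path_append[OF E_sym])
    show "induced_path E tp" unfolding tp_def by (rule induced_path_tl[OF induced_path_P[OF r(1)]])
    show "induced_path E mt" using induced_path_length_le_1[OF mt(1)] E_irrefl by blast
    show "set tp \<inter> set mt = {}" using mt(3) tp_sub by blast
    show "E (last tp) (hd mt)" if "tp \<noteq> []" "mt \<noteq> []" using that mt_cases T1 tp(2) by auto
    fix x y assume xy: "x \<in> set tp" "y \<in> set mt" "E x y"
    then have "(x = hd ?p \<and> y \<in> S) \<or> (x = last ?p \<and> y \<in> T)"
      using edge_leaving_path[OF r(1)] tp_sub mt(3) by blast
    then show "x = last tp \<and> y = hd mt" using mt_not_S[OF xy(2)] tp(2) mt_cases xy(2) by auto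
  qed
  show ?thesis unfolding tp_def[symmetric] append_assoc[symmetric]
  proof (rule induced_path_append[OF E_sym Y1 induced_path_rev[OF E_sym induced_path_P[OF r(2)]]])
    show "set (tp @ mt) \<inter> set (rev ?q) = {}" using mt(4) P_disjoint[OF r] tp_sub by auto
    show "E (last (tp @ mt)) (hd (rev ?q))"
      using last_Y1 mt_cases T0 T1 q_ne by (auto simp: hd_rev)
    fix x w assume xw: "x \<in> set (tp @ mt)" "w \<in> set (rev ?q)" "E x w"
    have "x \<notin> set ?q" using xw(1) mt(4) P_disjoint[OF r] tp_sub by auto
    then have "(w = hd ?q \<and> x \<in> S) \<or> (w = last ?q \<and> x \<in> T)"
      using edge_leaving_path[OF r(2) _ _ E_sym[OF xw(3)]] xw(2) by simp
    moreover have "x \<notin> S" using xw(1) tp_not_S mt_not_S by auto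
    ultimately have w: "w = last ?q" and x_T: "x \<in> T" by auto
    have "x = last (tp @ mt)"
    proof (cases "x \<in> set tp")
      case True
      then have "x = last ?p" using in_T_imp_last_P[OF r(1) x_T] tp_sub by blast
      then show ?thesis using last_Y1 mt_cases T1 xw(3) w by auto
    next
      case False
      then show ?thesis using xw(1) mt_cases last_Y1 by auto
    qed
    then show "x = last (tp @ mt) \<and> w = hd (rev ?q)" using w q_ne by (simp add: hd_rev)
  qed
qed

lemma induced_path_joined_at_S_and_T:
  assumes r: "r \<in> I" "r' \<in> I" "r \<noteq> r'"
    and ms: "length ms \<le> 1" "set ms \<subseteq> S" "set ms \<inter> set (P r) = {}" "set ms \<inter> set (P r') = {}"
    and mt: "length mt \<le> 1" "set mt \<subseteq> T" "set mt \<inter> set (P r) = {}" "set mt \<inter> set (P r') = {}"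
    and no_edge: "\<And>y y'. y \<in> set mt \<Longrightarrow> y' \<in> set ms \<Longrightarrow> \<not> E y y'"
    and S1: "\<And>y. ms = [y] \<Longrightarrow> E (hd (P r)) y \<and> E y (hd (P r')) \<and> \<not> E (hd (P r)) (hd (P r'))"
    and T0: "mt = [] \<Longrightarrow> E (last (P r)) (last (P r'))"
    and T1: "\<And>y. mt = [y] \<Longrightarrow> E (last (P r)) y \<and> E y (last (P r')) \<and> \<not> E (last (P r)) (last (P r'))"
  shows "induced_path E ((tl (P r) @ mt @ rev (P r')) @ ms)"
proof (rule induced_path_append[OF E_sym])
  let ?p = "P r" and ?q = "P r'" and ?Y = "tl (P r) @ mt @ rev (P r')"
  have tl_sub: "set (tl ?p) \<subseteq> set ?p" by (cases ?p) auto
  have hd_tl: "hd ?p \<notin> set (tl ?p)" using P_distinct[OF r(1)] by (cases ?p) auto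
  have "?q \<noteq> []" using P_length[OF r(2)] by auto
  then have last_Y: "last ?Y = hd ?q" by (simp add: last_rev)
  have ms_cases: "ms = [] \<or> (\<exists>y. ms = [y])" using ms(1) by (cases ms) auto
  have ms_not_T: "y \<notin> T" if "y \<in> set ms" for y using that ms(2) S_T_disjoint by blast
  show "induced_path E ?Y" by (rule induced_path_joined_at_T[OF r mt T0 T1])
  show "induced_path E ms" using induced_path_length_le_1[OF ms(1)] E_irrefl by blast
  show "set ?Y \<inter> set ms = {}" using ms(2,3,4) mt(2) S_T_disjoint tl_sub by auto
  show "E (last ?Y) (hd ms)" if "?Y \<noteq> []" "ms \<noteq> []" using that ms_cases S1 last_Y E_sym by auto
  fix x y assume xy: "x \<in> set ?Y" "y \<in> set ms" "E x y"
  have "y \<notin> set ?p" using xy(2) ms(3) by blast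
  then have "x \<notin> set (tl ?p)"
    using edge_leaving_path[OF r(1) _ _ xy(3)] tl_sub hd_tl ms_not_T[OF xy(2)] by blast
  moreover have "x \<notin> set mt" using no_edge xy(2,3) by blast
  ultimately have "x \<in> set ?q" using xy(1) by auto
  then have "(x = hd ?q \<and> y \<in> S) \<or> (x = last ?q \<and> y \<in> T)"
    using edge_leaving_path[OF r(2) _ _ xy(3)] xy(2) ms(4) by blast
  then show "x = last ?Y \<and> y = hd ms" using ms_not_T[OF xy(2)] last_Y ms_cases xy(2) by auto
qed

lemma hole_of_two_paths:
  assumes r: "r \<in> I" "r' \<in> I" "r \<noteq> r'"
    and ms: "length ms \<le> 1" "set ms \<subseteq> S" "set ms \<inter> set (P r) = {}" "set ms \<inter> set (P r') = {}"
      "set ms \<subseteq> V"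
    and mt: "length mt \<le> 1" "set mt \<subseteq> T" "set mt \<inter> set (P r) = {}" "set mt \<inter> set (P r') = {}"
      "set mt \<subseteq> V"
    and no_edge: "\<And>y y'. y \<in> set mt \<Longrightarrow> y' \<in> set ms \<Longrightarrow> \<not> E y y'"
    and S0: "ms = [] \<Longrightarrow> E (hd (P r)) (hd (P r'))"
    and S1: "\<And>y. ms = [y] \<Longrightarrow> E (hd (P r)) y \<and> E y (hd (P r')) \<and> \<not> E (hd (P r)) (hd (P r'))"
    and T0: "mt = [] \<Longrightarrow> E (last (P r)) (last (P r'))"
    and T1: "\<And>y. mt = [y] \<Longrightarrow> E (last (P r)) y \<and> E y (last (P r')) \<and> \<not> E (last (P r)) (last (P r'))"
  shows "hole V E (set (P r) \<union> set (P r') \<union> set ms \<union> set mt)"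
proof -
  let ?p = "P r" and ?q = "P r'"
  define x0 where "x0 = hd ?p"
  define Y where "Y = (tl ?p @ mt @ rev ?q) @ ms"
  have p: "?p = x0 # tl ?p" "tl ?p \<noteq> []" "x0 \<notin> set (tl ?p)"
    using P_length[OF r(1)] P_distinct[OF r(1)] unfolding x0_def by (cases ?p; cases "tl ?p"; auto)+
  have q_ne: "?q \<noteq> []" using P_length[OF r(2)] by auto
  have ms_cases: "ms = [] \<or> (\<exists>y. ms = [y])" using ms(1) by (cases ms) auto
  have set_p: "set ?p = insert x0 (set (tl ?p))" using p(1) by (metis list.simps(15))
  have set_Y: "set Y = set (tl ?p) \<union> set mt \<union> set ?q \<union> set ms" by (auto simp: Y_def)
  have hd_Y: "hd Y = ?p ! 1" using p(1,2) by (simp add: Y_def) (metis hd_conv_nth nth_Cons_Suc One_nat_def)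
  have last_Y: "last Y = (if ms = [] then hd ?q else hd ms)" using ms_cases q_ne by (auto simp: Y_def last_rev)
  have E_x0_P: "E x0 (?p ! j) \<longleftrightarrow> j = 1" if "j < length ?p" for j
    using induced_pathD[OF induced_path_P[OF r(1)], of 0 j] that p(2)
    by (simp add: x0_def hd_P_nth[OF r(1)] tl_Nil)
  \<comment> \<open>apart from its successor on its own path, x0 sees only vertices of S: the head of the other
      path, or the connector on the S-side\<close>
  have x0_nbrs: "y = hd Y \<or> y = last Y" if y: "y \<in> set Y" "E x0 y" for y
  proof (cases "y \<in> set ?p")
    case True
    then obtain j where "j < length ?p" "y = ?p ! j" by (metis in_set_conv_nth)
    then show ?thesis using E_x0_P y(2) hd_Y by auto
  next
    case False
    then have "y \<in> S" using edge_leaving_path[OF r(1) hd_P_mem[OF r(1)] _ y(2)[unfolded x0_def]]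
      hd_P_ne_last_P[OF r(1)] by blast
    then have "y = hd ?q \<or> y \<in> set ms"
      using y(1) False mt(2) S_T_disjoint in_S_imp_hd_P[OF r(2)] set_p by (auto simp: set_Y)
    then show ?thesis using last_Y ms_cases S1 y(2) by (auto simp: x0_def)
  qed
  have "hole V E (insert x0 (set Y))"
  proof (rule hole_insert_induced_path[OF E_sym E_irrefl])
    show "induced_path E Y"
      unfolding Y_def by (rule induced_path_joined_at_S_and_T[OF r ms(1-4) mt(1-4) no_edge S1 T0 T1])
    show "x0 \<notin> set Y" using p(3) hd_P_mem[OF r(1)] ms(3) mt(3) P_disjoint[OF r] by (auto simp: set_Y x0_def)
    show "length Y \<ge> 3" using P_length[OF r(2)] by (simp add: Y_def)
    show "E x0 (hd Y)" using E_x0_P[of 1] P_length[OF r(1)] hd_Y by simp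
    show "E x0 (last Y)" using S0 S1 ms_cases last_Y by (auto simp: x0_def)
    show "insert x0 (set Y) \<subseteq> V"
      using P_subset_V[OF r(1)] P_subset_V[OF r(2)] ms(5) mt(5) set_p by (auto simp: set_Y)
    show "\<And>y. y \<in> set Y \<Longrightarrow> E x0 y \<Longrightarrow> y = hd Y \<or> y = last Y" by (rule x0_nbrs)
  qed
  moreover have "insert x0 (set Y) = set ?p \<union> set ?q \<union> set ms \<union> set mt"
    using set_p set_Y by auto
  ultimately show ?thesis by simp
qed
end

section \<open>Apexed frames of odd length\<close>

locale odd_frame =
  fixes k L :: nat and a b :: "nat \<Rightarrow> 'a" and P :: "nat \<Rightarrow> 'a list" and EA :: "nat \<Rightarrow> nat \<Rightarrow> bool"
    and z :: 'a and V :: "'a set" and E :: "'a \<Rightarrow> 'a \<Rightarrow> bool"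
    and Av Bv W :: "'a set" and AE BE :: "'a \<Rightarrow> 'a \<Rightarrow> bool"
  defines "Av \<equiv> a ` {..<k}" and "Bv \<equiv> b ` {..<k}"
    and "AE \<equiv> \<lambda>x y. \<exists>i<k. \<exists>j<k. i \<noteq> j \<and> x = a i \<and> y = a j \<and> EA i j"
    and "BE \<equiv> \<lambda>x y. \<exists>i<k. \<exists>j<k. i \<noteq> j \<and> x = b i \<and> y = b j \<and> \<not> EA i j"
    and "W \<equiv> \<Union>i<k. set (P i)"
  assumes k_ge_3: "3 \<le> k" and L_ge_2: "2 \<le> L"
    and inj_a: "inj_on a {..<k}" and inj_b: "inj_on b {..<k}"
    and a_ne_b: "\<forall>i<k. \<forall>j<k. a i \<noteq> b j"
    and P_path: "\<forall>i<k. is_path (P i) L (a i) (b i)"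
    and P_disjoint: "\<forall>i<k. \<forall>j<k. i \<noteq> j \<longrightarrow> set (P i) \<inter> set (P j) = {}"
    and EA_sym: "\<forall>i j. EA i j = EA j i"
    and A_threshold: "threshold_graph Av AE" and B_threshold: "threshold_graph Bv BE"
    and A_disconnected: "\<not> connected_graph Av AE"
    and z_notin_W: "z \<notin> W" and V_eq: "V = insert z W"
    and E_iff: "\<forall>x y. E x y \<longleftrightarrow> (\<exists>i<k. path_edge (P i) x y) \<or> AE x y \<or> BE x y \<or>
                 (x = z \<and> y \<in> Av) \<or> (y = z \<and> x \<in> Av)"
begin

lemma P_props:
  assumes "i < k"
  shows "distinct (P i)" "length (P i) = Suc L" "hd (P i) = a i" "last (P i) = b i"
    "a i \<in> set (P i)" "b i \<in> set (P i)"
proof -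
  show "distinct (P i)" "length (P i) = Suc L" and hd: "hd (P i) = a i" and last: "last (P i) = b i"
    using P_path assms unfolding is_path_def by auto
  then have "P i \<noteq> []" by auto
  then show "a i \<in> set (P i)" "b i \<in> set (P i)" using hd last by (metis hd_in_set, metis last_in_set)
qed

lemma a_mem_P_iff: "i < k \<Longrightarrow> j < k \<Longrightarrow> a j \<in> set (P i) \<longleftrightarrow> j = i"
  using P_disjoint P_props(5)[of i] P_props(5)[of j] by (cases "j = i") auto

lemma b_mem_P_iff: "i < k \<Longrightarrow> j < k \<Longrightarrow> b j \<in> set (P i) \<longleftrightarrow> j = i"
  using P_disjoint P_props(6)[of i] P_props(6)[of j] by (cases "j = i") auto

lemma z_notin_P: "i < k \<Longrightarrow> z \<notin> set (P i)"
  using z_notin_W by (auto simp: W_def)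

lemma Av_Bv_disjoint: "Av \<inter> Bv = {}"
  using a_ne_b by (auto simp: Av_def Bv_def)

lemma z_notin_Av_Bv: "z \<notin> Av" "z \<notin> Bv"
  using z_notin_P P_props(5,6) by (auto simp: Av_def Bv_def)

lemma AE_in_Av: "AE x y \<Longrightarrow> x \<in> Av \<and> y \<in> Av"
  unfolding AE_def Av_def by blast

lemma BE_in_Bv: "BE x y \<Longrightarrow> x \<in> Bv \<and> y \<in> Bv"
  unfolding BE_def Bv_def by blast

lemma AE_a_iff: "i < k \<Longrightarrow> j < k \<Longrightarrow> AE (a i) (a j) \<longleftrightarrow> i \<noteq> j \<and> EA i j"
  using inj_a unfolding AE_def by (auto dest: inj_onD)

lemma BE_b_iff: "i < k \<Longrightarrow> j < k \<Longrightarrow> BE (b i) (b j) \<longleftrightarrow> i \<noteq> j \<and> \<not> EA i j"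
  using inj_b unfolding BE_def by (auto dest: inj_onD)

lemma no_path_edge_between_ends:
  assumes "i < k" "j < k" "path_edge (P r) x y" "r < k"
  shows "(x, y) \<noteq> (a i, a j)" "(x, y) \<noteq> (b i, b j)"
  using path_edge_mem[OF assms(3)] path_edge_irrefl[OF P_props(1)[OF assms(4)], of x]
    a_mem_P_iff[OF assms(4)] b_mem_P_iff[OF assms(4)] assms(1,2,3) by auto

lemma E_Av_iff: "x \<in> Av \<Longrightarrow> y \<in> Av \<Longrightarrow> E x y \<longleftrightarrow> AE x y"
  using E_iff no_path_edge_between_ends(1) BE_in_Bv Av_Bv_disjoint z_notin_Av_Bv
  unfolding Av_def by blast

lemma E_Bv_iff: "x \<in> Bv \<Longrightarrow> y \<in> Bv \<Longrightarrow> E x y \<longleftrightarrow> BE x y"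
  using E_iff no_path_edge_between_ends(2) AE_in_Av Av_Bv_disjoint z_notin_Av_Bv
  unfolding Bv_def by blast

lemma E_a_iff: "i < k \<Longrightarrow> j < k \<Longrightarrow> E (a i) (a j) \<longleftrightarrow> i \<noteq> j \<and> EA i j"
  using E_Av_iff AE_a_iff by (simp add: Av_def)

lemma E_b_iff: "i < k \<Longrightarrow> j < k \<Longrightarrow> E (b i) (b j) \<longleftrightarrow> i \<noteq> j \<and> \<not> EA i j"
  using E_Bv_iff BE_b_iff by (simp add: Bv_def)

lemma E_z_a: "i < k \<Longrightarrow> E z (a i) \<and> E (a i) z"
  using E_iff by (auto simp: Av_def)

lemma E_sym:
  assumes "E x y"
  shows "E y x"
proof -
  from assms consider (path) i where "i < k" "path_edge (P i) x y" | "AE x y" | "BE x y"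
    | "x = z \<and> y \<in> Av" | "y = z \<and> x \<in> Av"
    using E_iff by blast
  then show ?thesis
  proof cases
    case path
    then have "path_edge (P i) y x" by (simp add: path_edge_sym)
    then show ?thesis using E_iff path(1) by blast
  next
    case 2
    then have "AE y x" using EA_sym unfolding AE_def by blast
    then show ?thesis using E_iff by blast
  next
    case 3
    then have "BE y x" using EA_sym unfolding BE_def by blast
    then show ?thesis using E_iff by blast
  qed (use E_iff in blast)+
qed

lemma E_irrefl: "\<not> E x x"
proof
  assume "E x x"
  moreover have "\<not> path_edge (P i) x x" if "i < k" for i using path_edge_irrefl P_props(1)[OF that] .
  moreover have "\<not> AE x x" using AE_in_Av AE_a_iff by (auto simp: Av_def)
  moreover have "\<not> BE x x" using BE_in_Bv BE_b_iff by (auto simp: Bv_def)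
  ultimately show False using E_iff z_notin_Av_Bv by blast
qed

sublocale two_sided_paths V E "{..<k}" P "insert z Av" Bv
proof
  fix r assume r: "r \<in> {..<k}"
  then show "distinct (P r)" "3 \<le> length (P r)" using P_props L_ge_2 by auto
  show "insert z Av \<inter> set (P r) = {hd (P r)}" "Bv \<inter> set (P r) = {last (P r)}"
    using r z_notin_P a_mem_P_iff b_mem_P_iff P_props by (auto simp: Av_def Bv_def)
  show "set (P r) \<subseteq> V" using r by (auto simp: V_eq W_def)
next
  show "insert z Av \<inter> Bv = {}" using Av_Bv_disjoint z_notin_Av_Bv by blast
  show "P4_C4_free (insert z Av) E"
  proof (rule P4_C4_free_insert_universal)
    show "P4_C4_free Av E"
      using P4_C4_free_cong[OF threshold_graph_imp_P4_C4_free[OF A_threshold]] E_Av_iff by blast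
  qed (use E_iff in auto)
  show "P4_C4_free Bv E"
    using P4_C4_free_cong[OF threshold_graph_imp_P4_C4_free[OF B_threshold]] E_Bv_iff by blast
qed (use E_sym E_irrefl P_disjoint E_iff AE_in_Av BE_in_Bv in \<open>auto simp: V_eq W_def\<close>)

lemma ex_isolated_index: "\<exists>d<k. \<forall>j<k. j \<noteq> d \<longrightarrow> \<not> EA d j"
proof -
  have "a 0 \<in> Av" using k_ge_3 by (simp add: Av_def)
  then have "Av \<noteq> {}" by blast
  moreover have "AE x y \<Longrightarrow> AE y x" "\<not> AE x x" for x y
    using EA_sym AE_a_iff unfolding AE_def by blast+
  ultimately obtain x where "x \<in> Av" "\<forall>y\<in>Av. \<not> AE x y"
    using threshold_graph_disconnected_imp_isolated[OF A_threshold A_disconnected] by blast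
  then show ?thesis using AE_a_iff by (auto simp: Av_def)
qed

definition isolated :: nat where
  "isolated = (SOME d. d < k \<and> (\<forall>j<k. j \<noteq> d \<longrightarrow> \<not> EA d j))"

lemma isolated_less: "isolated < k"
  and isolated_not_EA: "j < k \<Longrightarrow> j \<noteq> isolated \<Longrightarrow> \<not> EA isolated j"
  using someI_ex[OF ex_isolated_index] unfolding isolated_def by blast+

lemma hole_through_apex:
  assumes "i < k" "j < k" "i \<noteq> j" "\<not> EA i j"
  shows "\<exists>K. hole V E K \<and> set (P i) \<subseteq> K \<and> set (P j) \<subseteq> K \<and> z \<in> K"
proof -
  have "hole V E (set (P i) \<union> set (P j) \<union> set [z] \<union> set [])"
  proof (rule hole_of_two_paths)
    show "E (hd (P i)) y \<and> E y (hd (P j)) \<and> \<not> E (hd (P i)) (hd (P j))" if "[z] = [y]" for y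
      using that E_z_a E_a_iff assms P_props(3) by auto
    show "E (last (P i)) (last (P j))" using E_b_iff assms P_props(4) by simp
  qed (use assms z_notin_P V_eq in auto)
  then show ?thesis by auto
qed

lemma hole_through_isolated_b:
  assumes "i < k" "j < k" "i \<noteq> j" "EA i j"
  shows "\<exists>K. hole V E K \<and> set (P i) \<subseteq> K \<and> set (P j) \<subseteq> K \<and> b isolated \<in> K"
proof -
  have "i \<noteq> isolated" "j \<noteq> isolated" "\<not> EA i isolated" "\<not> EA isolated j"
    using assms isolated_not_EA EA_sym by metis+
  then have "hole V E (set (P i) \<union> set (P j) \<union> set [] \<union> set [b isolated])"
  proof (intro hole_of_two_paths)
    show "E (hd (P i)) (hd (P j))" using E_a_iff assms P_props(3) by simp
    show "E (last (P i)) y \<and> E y (last (P j)) \<and> \<not> E (last (P i)) (last (P j))"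
      if "[b isolated] = [y]" for y
      using that E_b_iff assms P_props(4) isolated_less \<open>\<not> EA i isolated\<close> \<open>\<not> EA isolated j\<close>
        \<open>i \<noteq> isolated\<close> \<open>j \<noteq> isolated\<close> by auto
  qed (use assms isolated_less b_mem_P_iff V_eq P_props(6) in \<open>auto simp: Bv_def W_def\<close>)
  then show ?thesis by auto
qed

lemma hole_through_apex_and_isolated:
  assumes "i < k"
  shows "\<exists>K. hole V E K \<and> set (P i) \<subseteq> K \<and> set (P isolated) \<subseteq> K \<and> z \<in> K"
proof -
  obtain j where j: "j < k" "j \<noteq> isolated" "i \<noteq> isolated \<Longrightarrow> j = i"
  proof
    let ?j = "if i \<noteq> isolated then i else if isolated = 0 then 1 else 0"
    show "?j < k" "?j \<noteq> isolated" "i \<noteq> isolated \<Longrightarrow> ?j = i" using assms k_ge_3 by auto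
  qed
  then obtain K where "hole V E K" "set (P j) \<subseteq> K" "set (P isolated) \<subseteq> K" "z \<in> K"
    using hole_through_apex[OF j(1) isolated_less j(2)] isolated_not_EA[OF j(1,2)] EA_sym by blast
  then show ?thesis using j by (cases "i = isolated") auto
qed

lemma apex_holes_equivalent:
  assumes X: "hole V E X" "i < k" "set (P i) \<subseteq> X" "z \<in> X"
    and Y: "hole V E Y" "j < k" "set (P j) \<subseteq> Y" "z \<in> Y"
  shows "holes_equivalent V E X Y"
proof -
  obtain K where K: "hole V E K" "set (P i) \<subseteq> K" "set (P isolated) \<subseteq> K" "z \<in> K"
    using hole_through_apex_and_isolated[OF X(2)] by blast
  obtain K' where K': "hole V E K'" "set (P j) \<subseteq> K'" "set (P isolated) \<subseteq> K'" "z \<in> K'"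
    using hole_through_apex_and_isolated[OF Y(2)] by blast
  have "holes_close X K" "holes_close K K'" "holes_close K' Y"
    using holes_close_if_common_path[of _ i K z] holes_close_if_common_path[of _ isolated K' z]
      holes_close_if_common_path[of _ j Y z] X Y K K' isolated_less z_notin_P by auto
  then show ?thesis
    using holes_equivalent_if_close X(1) Y(1) K(1) K'(1) holes_equivalent_trans by metis
qed

lemma all_holes_equivalent:
  assumes "hole V E C" "hole V E C'"
  shows "holes_equivalent V E C C'"
proof -
  obtain K0 where K0: "hole V E K0" "set (P isolated) \<subseteq> K0" "z \<in> K0"
    using hole_through_apex_and_isolated[OF isolated_less] by blast
  \<comment> \<open>two paths are joined either through the apex or, when their A-ends are adjacent, through
      the B-end of the path with isolated A-end\<close>
  have "holes_equivalent V E X K0"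
    if ij: "i \<in> {..<k}" "j \<in> {..<k}" "i \<noteq> j" and X: "hole V E X" "set (P i) \<subseteq> X" "set (P j) \<subseteq> X"
    for i j X
  proof -
    have "i < k" "j < k" using ij by auto
    have X_K: "holes_equivalent V E X K" if K: "hole V E K" "set (P i) \<subseteq> K" "set (P j) \<subseteq> K" for K
      using holes_close_if_two_common_paths[OF X(1) ij] X(2,3) K(2,3)
      by (simp add: holes_equivalent_if_close[OF X(1) K(1)])
    show ?thesis
    proof (cases "EA i j")
      case False
      then obtain K where K: "hole V E K" "set (P i) \<subseteq> K" "set (P j) \<subseteq> K" "z \<in> K"
        using hole_through_apex[OF \<open>i < k\<close> \<open>j < k\<close> ij(3)] by blast
      then show ?thesis
        using X_K apex_holes_equivalent[OF K(1) \<open>i < k\<close> K(2,4) K0(1) isolated_less K0(2,3)]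
          holes_equivalent_trans by blast
    next
      case True
      then obtain K where K: "hole V E K" "set (P i) \<subseteq> K" "set (P j) \<subseteq> K" "b isolated \<in> K"
        using hole_through_isolated_b[OF \<open>i < k\<close> \<open>j < k\<close> ij(3)] by blast
      obtain K' where K': "hole V E K'" "set (P i) \<subseteq> K'" "set (P isolated) \<subseteq> K'" "z \<in> K'"
        using hole_through_apex_and_isolated[OF \<open>i < k\<close>] by blast
      have "i \<noteq> isolated" using True isolated_not_EA EA_sym \<open>j < k\<close> ij(3) by metis
      then have "b isolated \<notin> set (P i)" using b_mem_P_iff[OF \<open>i < k\<close> isolated_less] by simp
      then have "holes_close K K'"
        using holes_close_if_common_path[OF K(1), of i K' "b isolated"] \<open>i < k\<close>
          K(2,4) K'(2,3) P_props(6)[OF isolated_less] by auto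
      then show ?thesis
        using X_K[OF K(1-3)] holes_equivalent_if_close[OF K(1) K'(1)]
          apex_holes_equivalent[OF K'(1) \<open>i < k\<close> K'(2,4) K0(1) isolated_less K0(2,3)]
          holes_equivalent_trans by blast
    qed
  qed
  then show ?thesis using holes_equivalent_if_two_path_holes_equivalent assms by blast
qed

end

lemma odd_apexed_frame_imp_odd_frame:
  assumes "7 \<le> l" "odd_apexed_frame l V E"
  shows "\<exists>k a b P EA z. odd_frame k ((l - 3) div 2) a b P EA z V E"
  using assms(2) unfolding odd_apexed_frame_def Let_def
proof (elim conjE exE)
  let ?L = "(l - 3) div 2"
  fix k :: nat and a b :: "nat \<Rightarrow> 'a" and P :: "nat \<Rightarrow> 'a list" and EA :: "nat \<Rightarrow> nat \<Rightarrow> bool"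
    and z :: 'a and N :: "'a set"
  assume
    k: "3 \<le> k" and inj: "inj_on a {..<k}" "inj_on b {..<k}" and ab: "\<forall>i<k. \<forall>j<k. a i \<noteq> b j"
    and path: "\<forall>i<k. is_path (P i) ?L (a i) (b i)"
    and disj: "\<forall>i<k. \<forall>j<k. i \<noteq> j \<longrightarrow> set (P i) \<inter> set (P j) = {}"
    and sym: "\<forall>i j. EA i j = EA j i"
    and thrA: "threshold_graph (a ` {..<k}) (\<lambda>x y. \<exists>i<k. \<exists>j<k. i \<noteq> j \<and> x = a i \<and> y = a j \<and> EA i j)"
    and thrB: "threshold_graph (b ` {..<k}) (\<lambda>x y. \<exists>i<k. \<exists>j<k. i \<noteq> j \<and> x = b i \<and> y = b j \<and> \<not> EA i j)"
    and N: "(\<not> connected_graph (a ` {..<k}) (\<lambda>x y. \<exists>i<k. \<exists>j<k. i \<noteq> j \<and> x = a i \<and> y = a j \<and> EA i j)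
             \<and> N = a ` {..<k}) \<or>
           (\<not> connected_graph (b ` {..<k}) (\<lambda>x y. \<exists>i<k. \<exists>j<k. i \<noteq> j \<and> x = b i \<and> y = b j \<and> \<not> EA i j)
             \<and> N = b ` {..<k})"
    and z: "z \<notin> (\<Union>i<k. set (P i))" and V: "V = insert z (\<Union>i<k. set (P i))"
    and E: "\<forall>x y. E x y \<longleftrightarrow> (\<exists>i<k. path_edge (P i) x y) \<or>
      (\<exists>i<k. \<exists>j<k. i \<noteq> j \<and> x = a i \<and> y = a j \<and> EA i j) \<or>
      (\<exists>i<k. \<exists>j<k. i \<noteq> j \<and> x = b i \<and> y = b j \<and> \<not> EA i j) \<or>
      (x = z \<and> y \<in> N) \<or> (y = z \<and> x \<in> N)"
  have L: "2 \<le> ?L" using assms(1) by simp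
  from N show ?thesis
  proof (elim disjE conjE)
    assume "\<not> connected_graph (a ` {..<k}) (\<lambda>x y. \<exists>i<k. \<exists>j<k. i \<noteq> j \<and> x = a i \<and> y = a j \<and> EA i j)"
      "N = a ` {..<k}"
    then have "odd_frame k ?L a b P EA z V E"
      using k L inj ab path disj sym thrA thrB z V E by unfold_locales simp_all
    then show ?thesis by blast
  next
    \<comment> \<open>if the B-side is the disconnected one, read the frame backwards\<close>
    assume disconn: "\<not> connected_graph (b ` {..<k}) (\<lambda>x y. \<exists>i<k. \<exists>j<k. i \<noteq> j \<and> x = b i \<and> y = b j \<and> \<not> EA i j)"
      and N_eq: "N = b ` {..<k}"
    have "odd_frame k ?L b a (\<lambda>i. rev (P i)) (\<lambda>i j. \<not> EA i j) z V E"
    proof unfold_locales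
      show "\<forall>x y. E x y \<longleftrightarrow> (\<exists>i<k. path_edge (rev (P i)) x y) \<or>
          (\<exists>i<k. \<exists>j<k. i \<noteq> j \<and> x = b i \<and> y = b j \<and> \<not> EA i j) \<or>
          (\<exists>i<k. \<exists>j<k. i \<noteq> j \<and> x = a i \<and> y = a j \<and> \<not> \<not> EA i j) \<or>
          (x = z \<and> y \<in> b ` {..<k}) \<or> (y = z \<and> x \<in> b ` {..<k})"
        using E N_eq by (simp add: path_edge_rev disj_commute disj_left_commute)
      show "\<forall>i<k. \<forall>j<k. b i \<noteq> a j" using ab by metis
    qed (use k L inj path disj sym thrA thrB disconn z V in \<open>auto simp: is_path_def hd_rev last_rev\<close>)
    then show ?thesis by blast
  qed
qed

section \<open>Apexed frames of even length\<close>

lemma image_if_less_add: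
  fixes n m :: nat
  shows "(\<lambda>r. if r < n then f r else g (r - n)) ` {..<n + m} = f ` {..<n} \<union> g ` {..<m}"
proof (intro equalityI subsetI)
  fix x assume "x \<in> f ` {..<n} \<union> g ` {..<m}"
  then show "x \<in> (\<lambda>r. if r < n then f r else g (r - n)) ` {..<n + m}"
  proof (elim UnE imageE)
    fix j assume "j \<in> {..<m}" "x = g j"
    then show ?thesis by (intro image_eqI[of _ _ "n + j"]) auto
  qed auto
qed auto

locale even_frame =
  fixes n m L :: nat and a b c d :: "nat \<Rightarrow> 'a" and P Q :: "nat \<Rightarrow> 'a list"
    and R :: "nat \<Rightarrow> nat \<Rightarrow> bool" and z1 z2 :: 'a and V :: "'a set" and E :: "'a \<Rightarrow> 'a \<Rightarrow> bool"
    and Av Bv W :: "'a set" and AE BE :: "'a \<Rightarrow> 'a \<Rightarrow> bool"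
  defines "Av \<equiv> a ` {..<n} \<union> c ` {..<m}"
    and "AE \<equiv> \<lambda>x y. (\<exists>j<m. \<exists>j'<m. j \<noteq> j' \<and> x = c j \<and> y = c j') \<or>
                     (\<exists>i<n. \<exists>j<m. R i j \<and> ((x = a i \<and> y = c j) \<or> (x = c j \<and> y = a i)))"
    and "Bv \<equiv> b ` {..<n} \<union> d ` {..<m}"
    and "BE \<equiv> \<lambda>x y. (\<exists>j<m. \<exists>j'<m. j \<noteq> j' \<and> x = d j \<and> y = d j') \<or>
                     (\<exists>i<n. \<exists>j<m. \<not> R i j \<and> ((x = b i \<and> y = d j) \<or> (x = d j \<and> y = b i)))"
    and "W \<equiv> (\<Union>i<n. set (P i)) \<union> (\<Union>j<m. set (Q j))"
  assumes n_ge_2: "2 \<le> n" and L_ge_2: "2 \<le> L"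
    and inj: "inj_on a {..<n}" "inj_on b {..<n}" "inj_on c {..<m}" "inj_on d {..<m}"
    and ends_disjoint: "a ` {..<n} \<inter> b ` {..<n} = {}" "a ` {..<n} \<inter> c ` {..<m} = {}"
      "a ` {..<n} \<inter> d ` {..<m} = {}" "b ` {..<n} \<inter> c ` {..<m} = {}"
      "b ` {..<n} \<inter> d ` {..<m} = {}" "c ` {..<m} \<inter> d ` {..<m} = {}"
    and P_path: "\<forall>i<n. is_path (P i) L (a i) (b i)"
    and Q_path: "\<forall>j<m. is_path (Q j) (Suc L) (c j) (d j)"
    and P_disjoint: "\<forall>i<n. \<forall>i'<n. i \<noteq> i' \<longrightarrow> set (P i) \<inter> set (P i') = {}"
    and Q_disjoint: "\<forall>j<m. \<forall>j'<m. j \<noteq> j' \<longrightarrow> set (Q j) \<inter> set (Q j') = {}"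
    and P_Q_disjoint: "\<forall>i<n. \<forall>j<m. set (P i) \<inter> set (Q j) = {}"
    and no_2K2: "\<not> (\<exists>i<n. \<exists>i'<n. \<exists>j<m. \<exists>j'<m. R i j \<and> R i' j' \<and> \<not> R i j' \<and> \<not> R i' j)"
    and z1_ne_z2: "z1 \<noteq> z2" and z1_notin_W: "z1 \<notin> W" and z2_notin_W: "z2 \<notin> W"
    and V_eq: "V = {z1, z2} \<union> W"
    and E_iff: "\<forall>x y. E x y \<longleftrightarrow>
           (\<exists>i<n. path_edge (P i) x y) \<or> (\<exists>j<m. path_edge (Q j) x y) \<or> AE x y \<or> BE x y \<or>
           (x = z1 \<and> y \<in> Av) \<or> (y = z1 \<and> x \<in> Av) \<or>
           (x = z2 \<and> y \<in> Bv) \<or> (y = z2 \<and> x \<in> Bv)"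
begin

definition PQ :: "nat \<Rightarrow> 'a list" where
  "PQ r = (if r < n then P r else Q (r - n))"

definition A_end :: "nat \<Rightarrow> 'a" where
  "A_end r = (if r < n then a r else c (r - n))"

definition B_end :: "nat \<Rightarrow> 'a" where
  "B_end r = (if r < n then b r else d (r - n))"

lemma PQ_path: "r < n + m \<Longrightarrow> is_path (PQ r) (if r < n then L else Suc L) (A_end r) (B_end r)"
  using P_path Q_path by (auto simp: PQ_def A_end_def B_end_def)

lemma PQ_props:
  assumes "r < n + m"
  shows "distinct (PQ r)" "length (PQ r) \<ge> 3" "hd (PQ r) = A_end r" "last (PQ r) = B_end r"
    "A_end r \<in> set (PQ r)" "B_end r \<in> set (PQ r)"
proof -
  show "distinct (PQ r)" "length (PQ r) \<ge> 3" and hd: "hd (PQ r) = A_end r" and last: "last (PQ r) = B_end r"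
    using PQ_path[OF assms] L_ge_2 unfolding is_path_def by auto
  then have "PQ r \<noteq> []" by auto
  then show "A_end r \<in> set (PQ r)" "B_end r \<in> set (PQ r)" using hd last by (metis hd_in_set, metis last_in_set)
qed

lemma PQ_disjoint: "r < n + m \<Longrightarrow> r' < n + m \<Longrightarrow> r \<noteq> r' \<Longrightarrow> set (PQ r) \<inter> set (PQ r') = {}"
  using P_disjoint Q_disjoint P_Q_disjoint unfolding PQ_def
  by (cases "r < n"; cases "r' < n") (auto simp: Int_commute diff_less_mono)

lemma Av_eq: "Av = A_end ` {..<n + m}"
  unfolding Av_def A_end_def by (rule image_if_less_add[symmetric])

lemma Bv_eq: "Bv = B_end ` {..<n + m}"
  unfolding Bv_def B_end_def by (rule image_if_less_add[symmetric])

lemma W_eq: "W = (\<Union>r<n + m. set (PQ r))"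
proof -
  have eq: "(\<lambda>r. set (PQ r)) = (\<lambda>r. if r < n then set (P r) else set (Q (r - n)))"
    by (simp add: PQ_def fun_eq_iff)
  have "(\<Union>r<n + m. set (PQ r)) = \<Union> ((\<lambda>r. if r < n then set (P r) else set (Q (r - n))) ` {..<n + m})"
    by (simp only: eq)
  also have "\<dots> = W"
    unfolding image_if_less_add[of n "\<lambda>i. set (P i)" "\<lambda>j. set (Q j)" m] W_def by simp
  finally show ?thesis by simp
qed

lemma A_end_mem_PQ_iff: "r < n + m \<Longrightarrow> r' < n + m \<Longrightarrow> A_end r' \<in> set (PQ r) \<longleftrightarrow> r' = r"
  using PQ_disjoint PQ_props(5) by blast

lemma B_end_mem_PQ_iff: "r < n + m \<Longrightarrow> r' < n + m \<Longrightarrow> B_end r' \<in> set (PQ r) \<longleftrightarrow> r' = r"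
  using PQ_disjoint PQ_props(6) by blast

lemma Av_inter_PQ: "r < n + m \<Longrightarrow> Av \<inter> set (PQ r) = {hd (PQ r)}"
  using A_end_mem_PQ_iff PQ_props(3,5) by (auto simp: Av_eq)

lemma Bv_inter_PQ: "r < n + m \<Longrightarrow> Bv \<inter> set (PQ r) = {last (PQ r)}"
  using B_end_mem_PQ_iff PQ_props(4,6) by (auto simp: Bv_eq)

lemma Av_Bv_disjoint: "Av \<inter> Bv = {}"
  using ends_disjoint by (auto simp: Av_def Bv_def)

lemma z_notin_PQ: "r < n + m \<Longrightarrow> z1 \<notin> set (PQ r) \<and> z2 \<notin> set (PQ r)"
  using z1_notin_W z2_notin_W by (auto simp: W_eq)

lemma z_notin_Av_Bv: "z1 \<notin> Av" "z2 \<notin> Av" "z1 \<notin> Bv" "z2 \<notin> Bv"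
  using z_notin_PQ PQ_props(5,6) by (auto simp: Av_eq Bv_eq)

lemma AE_in_Av: "AE x y \<Longrightarrow> x \<in> Av \<and> y \<in> Av"
  unfolding AE_def Av_def by blast

lemma BE_in_Bv: "BE x y \<Longrightarrow> x \<in> Bv \<and> y \<in> Bv"
  unfolding BE_def Bv_def by blast

lemma path_edge_P_Q_iff:
  "(\<exists>i<n. path_edge (P i) x y) \<or> (\<exists>j<m. path_edge (Q j) x y) \<longleftrightarrow> (\<exists>r<n + m. path_edge (PQ r) x y)"
proof
  assume "\<exists>r<n + m. path_edge (PQ r) x y"
  then obtain r where r: "r < n + m" "path_edge (PQ r) x y" by blast
  show "(\<exists>i<n. path_edge (P i) x y) \<or> (\<exists>j<m. path_edge (Q j) x y)"
  proof (cases "r < n")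
    case False
    then have "r - n < m" "path_edge (Q (r - n)) x y" using r by (auto simp: PQ_def)
    then show ?thesis by blast
  qed (use r in \<open>auto simp: PQ_def\<close>)
next
  assume "(\<exists>i<n. path_edge (P i) x y) \<or> (\<exists>j<m. path_edge (Q j) x y)"
  then show "\<exists>r<n + m. path_edge (PQ r) x y"
  proof (elim disjE exE conjE)
    fix i assume "i < n" "path_edge (P i) x y"
    then show ?thesis by (intro exI[of _ i]) (simp add: PQ_def)
  next
    fix j assume "j < m" "path_edge (Q j) x y"
    then show ?thesis by (intro exI[of _ "n + j"]) (simp add: PQ_def)
  qed
qed

lemma E_iff_PQ: "E x y \<longleftrightarrow> (\<exists>r<n + m. path_edge (PQ r) x y) \<or> AE x y \<or> BE x y \<or>
    (x = z1 \<and> y \<in> Av) \<or> (y = z1 \<and> x \<in> Av) \<or> (x = z2 \<and> y \<in> Bv) \<or> (y = z2 \<and> x \<in> Bv)"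
  unfolding E_iff[rule_format] path_edge_P_Q_iff[symmetric] by (simp only: disj_assoc)

lemma no_path_edge_in_Av_Bv:
  assumes "r < n + m" "path_edge (PQ r) x y"
  shows "\<not> (x \<in> Av \<and> y \<in> Av)" "\<not> (x \<in> Bv \<and> y \<in> Bv)"
  using path_edge_mem[OF assms(2)] path_edge_irrefl[OF PQ_props(1)[OF assms(1)]] assms(2)
    Av_inter_PQ[OF assms(1)] Bv_inter_PQ[OF assms(1)] by (metis IntI singletonD)+

lemma E_Av_iff: "x \<in> Av \<Longrightarrow> y \<in> Av \<Longrightarrow> E x y \<longleftrightarrow> AE x y"
  using E_iff_PQ no_path_edge_in_Av_Bv(1) BE_in_Bv Av_Bv_disjoint z_notin_Av_Bv by blast

lemma E_Bv_iff: "x \<in> Bv \<Longrightarrow> y \<in> Bv \<Longrightarrow> E x y \<longleftrightarrow> BE x y"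
  using E_iff_PQ no_path_edge_in_Av_Bv(2) AE_in_Av Av_Bv_disjoint z_notin_Av_Bv by blast

lemma AE_sym: "AE x y \<Longrightarrow> AE y x"
  unfolding AE_def by blast

lemma BE_sym: "BE x y \<Longrightarrow> BE y x"
  unfolding BE_def by blast

lemma AE_irrefl: "\<not> AE x x"
  using inj(3) ends_disjoint(2) unfolding AE_def by (auto dest: inj_onD)

lemma BE_irrefl: "\<not> BE x x"
  using inj(4) ends_disjoint(5) unfolding BE_def by (auto dest: inj_onD)

lemma E_sym:
  assumes "E x y"
  shows "E y x"
proof -
  from assms consider (path) r where "r < n + m" "path_edge (PQ r) x y" | "AE x y" | "BE x y"
    | "x = z1 \<and> y \<in> Av" | "y = z1 \<and> x \<in> Av" | "x = z2 \<and> y \<in> Bv" | "y = z2 \<and> x \<in> Bv"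
    using E_iff_PQ by blast
  then show ?thesis
  proof cases
    case path
    then have "path_edge (PQ r) y x" by (simp add: path_edge_sym)
    then show ?thesis using E_iff_PQ path(1) by blast
  qed (use E_iff_PQ AE_sym BE_sym in blast)+
qed

lemma E_irrefl: "\<not> E x x"
proof
  assume "E x x"
  moreover have "\<not> path_edge (PQ r) x x" if "r < n + m" for r using path_edge_irrefl PQ_props(1)[OF that] .
  ultimately show False using E_iff_PQ AE_irrefl BE_irrefl z_notin_Av_Bv by blast
qed

sublocale two_sided_paths V E "{..<n + m}" PQ "insert z1 Av" "insert z2 Bv"
proof
  fix r assume r: "r \<in> {..<n + m}"
  then show "distinct (PQ r)" "3 \<le> length (PQ r)" using PQ_props by auto
  show "insert z1 Av \<inter> set (PQ r) = {hd (PQ r)}" "insert z2 Bv \<inter> set (PQ r) = {last (PQ r)}"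
    using r z_notin_PQ Av_inter_PQ Bv_inter_PQ by auto
  show "set (PQ r) \<subseteq> V" using r by (auto simp: V_eq W_eq)
next
  show "insert z1 Av \<inter> insert z2 Bv = {}" using Av_Bv_disjoint z_notin_Av_Bv z1_ne_z2 by blast
  show "P4_C4_free (insert z1 Av) E"
  proof (rule P4_C4_free_insert_universal)
    have "P4_C4_free Av AE"
      unfolding Av_def AE_def by (rule P4_C4_free_split_graph[OF inj(1,3) ends_disjoint(2) no_2K2])
    then show "P4_C4_free Av E" using P4_C4_free_cong E_Av_iff by blast
  qed (use E_iff in auto)
  show "P4_C4_free (insert z2 Bv) E"
  proof (rule P4_C4_free_insert_universal)
    have "\<not> (\<exists>i<n. \<exists>i'<n. \<exists>j<m. \<exists>j'<m. \<not> R i j \<and> \<not> R i' j' \<and> \<not> \<not> R i j' \<and> \<not> \<not> R i' j)"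
      using no_2K2 by blast
    then have "P4_C4_free Bv BE"
      unfolding Bv_def BE_def by (rule P4_C4_free_split_graph[OF inj(2,4) ends_disjoint(5)])
    then show "P4_C4_free Bv E" using P4_C4_free_cong E_Bv_iff by blast
  qed (use E_iff in auto)
next
  show "E y x" if "E x y" for x y using E_sym that .
  show "\<not> E x x" for x by (rule E_irrefl)
  show "set (PQ r) \<inter> set (PQ r') = {}" if "r \<in> {..<n + m}" "r' \<in> {..<n + m}" "r \<noteq> r'" for r r'
    using PQ_disjoint that by simp
  show "V \<subseteq> insert z1 Av \<union> insert z2 Bv \<union> (\<Union>r\<in>{..<n + m}. set (PQ r))"
    by (auto simp: V_eq W_eq)
  show "E x y" if "r \<in> {..<n + m}" "path_edge (PQ r) x y" for r x y
    using that E_iff_PQ[of x y] by auto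
  show "(\<exists>r\<in>{..<n + m}. path_edge (PQ r) x y) \<or> (x \<in> insert z1 Av \<and> y \<in> insert z1 Av) \<or>
      (x \<in> insert z2 Bv \<and> y \<in> insert z2 Bv)" if "E x y" for x y
    using that E_iff_PQ[of x y] AE_in_Av[of x y] BE_in_Bv[of x y] by auto
qed

lemma A_end_P: "r < n \<Longrightarrow> A_end r = a r" and B_end_P: "r < n \<Longrightarrow> B_end r = b r"
  and A_end_Q: "\<not> r < n \<Longrightarrow> A_end r = c (r - n)" and B_end_Q: "\<not> r < n \<Longrightarrow> B_end r = d (r - n)"
  by (simp_all add: A_end_def B_end_def)

lemma A_end_in_Av: "r < n + m \<Longrightarrow> A_end r \<in> Av" and B_end_in_Bv: "r < n + m \<Longrightarrow> B_end r \<in> Bv"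
  by (simp_all add: Av_eq Bv_eq)

lemma E_A_ends_P:
  assumes "r < n" "r' < n"
  shows "\<not> E (A_end r) (A_end r')"
proof -
  have "\<not> AE (a r) (a r')" using assms ends_disjoint(2) unfolding AE_def by blast
  moreover have "a r \<in> Av" "a r' \<in> Av" using assms by (simp_all add: Av_def)
  ultimately show ?thesis using E_Av_iff assms by (simp add: A_end_P)
qed

lemma E_B_ends_P:
  assumes "r < n" "r' < n"
  shows "\<not> E (B_end r) (B_end r')"
proof -
  have "\<not> BE (b r) (b r')" using assms ends_disjoint(5) unfolding BE_def by blast
  moreover have "b r \<in> Bv" "b r' \<in> Bv" using assms by (simp_all add: Bv_def)
  ultimately show ?thesis using E_Bv_iff assms by (simp add: B_end_P)
qed

lemma E_A_ends_P_Q: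
  assumes "r < n" "\<not> q < n" "q < n + m"
  shows "E (A_end r) (A_end q) \<longleftrightarrow> R r (q - n)"
proof -
  have "q - n < m" using assms(2,3) by linarith
  then have "AE (a r) (c (q - n)) \<longleftrightarrow> R r (q - n)"
    using assms(1) inj(1,3) ends_disjoint(2) unfolding AE_def by (auto dest: inj_onD)
  moreover have "a r \<in> Av" "c (q - n) \<in> Av" using assms \<open>q - n < m\<close> by (simp_all add: Av_def)
  ultimately show ?thesis using E_Av_iff assms by (simp add: A_end_P A_end_Q)
qed

lemma E_B_ends_P_Q:
  assumes "r < n" "\<not> q < n" "q < n + m"
  shows "E (B_end r) (B_end q) \<longleftrightarrow> \<not> R r (q - n)"
proof -
  have "q - n < m" using assms(2,3) by linarith
  then have "BE (b r) (d (q - n)) \<longleftrightarrow> \<not> R r (q - n)"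
    using assms(1) inj(2,4) ends_disjoint(5) unfolding BE_def by (auto dest: inj_onD)
  moreover have "b r \<in> Bv" "d (q - n) \<in> Bv" using assms \<open>q - n < m\<close> by (simp_all add: Bv_def)
  ultimately show ?thesis using E_Bv_iff assms by (simp add: B_end_P B_end_Q)
qed

lemma E_z1: "x \<in> Av \<Longrightarrow> E z1 x \<and> E x z1" and E_z2: "x \<in> Bv \<Longrightarrow> E z2 x \<and> E x z2"
  using E_iff by auto

lemma not_E_z2_z1: "\<not> E z2 z1"
proof
  assume "E z2 z1"
  moreover have "\<not> path_edge (PQ r) z2 z1" if "r < n + m" for r
    using z_notin_PQ[OF that] path_edge_mem[of "PQ r" z2 z1] by auto
  moreover have "\<not> AE z2 z1" "\<not> BE z2 z1" using AE_in_Av BE_in_Bv z_notin_Av_Bv by blast+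
  ultimately show False using E_iff_PQ[of z2 z1] z_notin_Av_Bv z1_ne_z2 by blast
qed

lemma hole_through_two_P:
  assumes "r < n" "r' < n" "r \<noteq> r'"
  shows "\<exists>K. hole V E K \<and> set (PQ r) \<subseteq> K \<and> set (PQ r') \<subseteq> K \<and> z1 \<in> K \<and> z2 \<in> K"
proof -
  have "hole V E (set (PQ r) \<union> set (PQ r') \<union> set [z1] \<union> set [z2])"
  proof (rule hole_of_two_paths)
    show "E (hd (PQ r)) y \<and> E y (hd (PQ r')) \<and> \<not> E (hd (PQ r)) (hd (PQ r'))" if "[z1] = [y]" for y
      using that assms E_z1 A_end_in_Av E_A_ends_P PQ_props(3) by auto
    show "E (last (PQ r)) y \<and> E y (last (PQ r')) \<and> \<not> E (last (PQ r)) (last (PQ r'))" if "[z2] = [y]" for y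
      using that assms E_z2 B_end_in_Bv E_B_ends_P PQ_props(4) by auto
  qed (use assms z_notin_PQ not_E_z2_z1 in \<open>auto simp: V_eq\<close>)
  then show ?thesis by auto
qed

lemma hole_through_P_Q:
  assumes "r < n" "\<not> q < n" "q < n + m"
  shows "\<exists>K. hole V E K \<and> set (PQ r) \<subseteq> K \<and> set (PQ q) \<subseteq> K \<and> (z1 \<in> K \<or> z2 \<in> K)"
proof (cases "R r (q - n)")
  case True
  have "hole V E (set (PQ r) \<union> set (PQ q) \<union> set [] \<union> set [z2])"
  proof (rule hole_of_two_paths)
    show "E (hd (PQ r)) (hd (PQ q))" using assms True E_A_ends_P_Q PQ_props(3) by simp
    show "E (last (PQ r)) y \<and> E y (last (PQ q)) \<and> \<not> E (last (PQ r)) (last (PQ q))" if "[z2] = [y]" for y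
      using that assms True E_z2 B_end_in_Bv E_B_ends_P_Q PQ_props(4) by auto
  qed (use assms z_notin_PQ in \<open>auto simp: V_eq\<close>)
  then show ?thesis by auto
next
  case False
  have "hole V E (set (PQ r) \<union> set (PQ q) \<union> set [z1] \<union> set [])"
  proof (rule hole_of_two_paths)
    show "E (hd (PQ r)) y \<and> E y (hd (PQ q)) \<and> \<not> E (hd (PQ r)) (hd (PQ q))" if "[z1] = [y]" for y
      using that assms False E_z1 A_end_in_Av E_A_ends_P_Q PQ_props(3) by auto
    show "E (last (PQ r)) (last (PQ q))" using assms False E_B_ends_P_Q PQ_props(4) by simp
  qed (use assms z_notin_PQ in \<open>auto simp: V_eq\<close>)
  then show ?thesis by auto
qed

lemma hole_through_P0:
  assumes "r < n"
  shows "\<exists>K. hole V E K \<and> set (PQ 0) \<subseteq> K \<and> set (PQ r) \<subseteq> K \<and> z1 \<in> K \<and> z2 \<in> K"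
proof -
  let ?r' = "if r = 0 then 1 else r"
  have "0 < n" "?r' < n" "0 \<noteq> ?r'" using assms n_ge_2 by auto
  then obtain K where "hole V E K" "set (PQ 0) \<subseteq> K" "set (PQ ?r') \<subseteq> K" "z1 \<in> K" "z2 \<in> K"
    using hole_through_two_P by blast
  then show ?thesis by (cases "r = 0") auto
qed

lemma apex_holes_equivalent:
  assumes X: "hole V E X" "r < n" "set (PQ r) \<subseteq> X" "z \<in> X" "z \<in> {z1, z2}"
    and Y: "hole V E Y" "r' < n" "set (PQ r') \<subseteq> Y" "z' \<in> Y" "z' \<in> {z1, z2}"
  shows "holes_equivalent V E X Y"
proof -
  obtain K where K: "hole V E K" "set (PQ 0) \<subseteq> K" "set (PQ r) \<subseteq> K" "z1 \<in> K" "z2 \<in> K"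
    using hole_through_P0[OF X(2)] by blast
  obtain K' where K': "hole V E K'" "set (PQ 0) \<subseteq> K'" "set (PQ r') \<subseteq> K'" "z1 \<in> K'" "z2 \<in> K'"
    using hole_through_P0[OF Y(2)] by blast
  have "0 < n" using n_ge_2 by simp
  have "holes_close X K" "holes_close K K'" "holes_close K' Y"
    using holes_close_if_common_path[of _ r K z] holes_close_if_common_path[of _ 0 K' z1]
      holes_close_if_common_path[of _ r' Y z'] X Y K K' \<open>0 < n\<close> z_notin_PQ by auto
  then show ?thesis
    using holes_equivalent_if_close X(1) Y(1) K(1) K'(1) holes_equivalent_trans by metis
qed

lemma card_Q_ge_4: "\<not> q < n \<Longrightarrow> q < n + m \<Longrightarrow> 4 \<le> card (set (PQ q))"
  using PQ_path[of q] L_ge_2 distinct_card[of "PQ q"] unfolding is_path_def by simp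

lemma all_holes_equivalent:
  assumes "hole V E C" "hole V E C'"
  shows "holes_equivalent V E C C'"
proof -
  have "0 < n" using n_ge_2 by simp
  then obtain K0 where K0: "hole V E K0" "set (PQ 0) \<subseteq> K0" "z1 \<in> K0"
    using hole_through_P0 by blast
  \<comment> \<open>a hole through a path of \<open>Q\<close> is close to any other such hole, since these paths have
      at least four vertices\<close>
  have "holes_equivalent V E X K0"
    if rr: "r \<in> {..<n + m}" "r' \<in> {..<n + m}" "r \<noteq> r'"
      and X: "hole V E X" "set (PQ r) \<subseteq> X" "set (PQ r') \<subseteq> X" for r r' X
  proof (cases "r < n \<and> r' < n")
    case True
    then obtain K where K: "hole V E K" "set (PQ r) \<subseteq> K" "set (PQ r') \<subseteq> K" "z1 \<in> K"
      using hole_through_two_P rr(3) by blast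
    have "holes_close X K"
      using holes_close_if_two_common_paths[OF X(1) rr] X(2,3) K(2,3) by simp
    moreover have "holes_equivalent V E K K0"
      using True apex_holes_equivalent[OF K(1) _ K(2,4) _ K0(1) \<open>0 < n\<close> K0(2,3)] by blast
    ultimately show ?thesis using holes_equivalent_if_close[OF X(1) K(1)] holes_equivalent_trans by blast
  next
    case False
    then obtain q where q: "\<not> q < n" "q < n + m" "set (PQ q) \<subseteq> X" using rr X by auto
    then obtain K where K: "hole V E K" "set (PQ 0) \<subseteq> K" "set (PQ q) \<subseteq> K" "z1 \<in> K \<or> z2 \<in> K"
      using hole_through_P_Q[OF \<open>0 < n\<close>] by blast
    have "holes_close X K"
      using holes_close_if_subset[OF X(1), of "set (PQ q)" K] q K(3) card_Q_ge_4 by simp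
    moreover have "holes_equivalent V E K K0"
      using K(4) apex_holes_equivalent[OF K(1) \<open>0 < n\<close> K(2) _ _ K0(1) \<open>0 < n\<close> K0(2,3)] by blast
    ultimately show ?thesis using holes_equivalent_if_close[OF X(1) K(1)] holes_equivalent_trans by blast
  qed
  then show ?thesis using holes_equivalent_if_two_path_holes_equivalent assms by blast
qed
end

lemma even_apexed_frame_imp_even_frame:
  assumes "7 \<le> l" "even_apexed_frame l V E"
  shows "\<exists>n m a b c d P Q R z1 z2. even_frame n m (l div 2 - 2) a b c d P Q R z1 z2 V E"
  using assms(2) unfolding even_apexed_frame_def Let_def
proof (elim conjE exE)
  fix n m :: nat and a b c d :: "nat \<Rightarrow> 'a" and P Q :: "nat \<Rightarrow> 'a list" and R :: "nat \<Rightarrow> nat \<Rightarrow> bool"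
    and z1 z2 :: 'a
  assume "even l" and facts: "2 \<le> n" "inj_on a {..<n}" "inj_on b {..<n}" "inj_on c {..<m}" "inj_on d {..<m}"
    "a ` {..<n} \<inter> b ` {..<n} = {}" "a ` {..<n} \<inter> c ` {..<m} = {}"
    "a ` {..<n} \<inter> d ` {..<m} = {}" "b ` {..<n} \<inter> c ` {..<m} = {}"
    "b ` {..<n} \<inter> d ` {..<m} = {}" "c ` {..<m} \<inter> d ` {..<m} = {}"
    "\<forall>i<n. is_path (P i) (l div 2 - 2) (a i) (b i)"
    "\<forall>j<m. is_path (Q j) (l div 2 - 1) (c j) (d j)"
    "\<forall>i<n. \<forall>i'<n. i \<noteq> i' \<longrightarrow> set (P i) \<inter> set (P i') = {}"
    "\<forall>j<m. \<forall>j'<m. j \<noteq> j' \<longrightarrow> set (Q j) \<inter> set (Q j') = {}"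
    "\<forall>i<n. \<forall>j<m. set (P i) \<inter> set (Q j) = {}"
    "\<not> (\<exists>i<n. \<exists>i'<n. \<exists>j<m. \<exists>j'<m. R i j \<and> R i' j' \<and> \<not> R i j' \<and> \<not> R i' j)"
    "z1 \<noteq> z2" "z1 \<notin> (\<Union>i<n. set (P i)) \<union> (\<Union>j<m. set (Q j))"
    "z2 \<notin> (\<Union>i<n. set (P i)) \<union> (\<Union>j<m. set (Q j))"
    "V = {z1, z2} \<union> ((\<Union>i<n. set (P i)) \<union> (\<Union>j<m. set (Q j)))"
    "\<forall>x y. E x y \<longleftrightarrow>
           (\<exists>i<n. path_edge (P i) x y) \<or> (\<exists>j<m. path_edge (Q j) x y) \<or>
           ((\<exists>j<m. \<exists>j'<m. j \<noteq> j' \<and> x = c j \<and> y = c j') \<or>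
              (\<exists>i<n. \<exists>j<m. R i j \<and> ((x = a i \<and> y = c j) \<or> (x = c j \<and> y = a i)))) \<or>
           ((\<exists>j<m. \<exists>j'<m. j \<noteq> j' \<and> x = d j \<and> y = d j') \<or>
              (\<exists>i<n. \<exists>j<m. \<not> R i j \<and> ((x = b i \<and> y = d j) \<or> (x = d j \<and> y = b i)))) \<or>
           (x = z1 \<and> y \<in> a ` {..<n} \<union> c ` {..<m}) \<or> (y = z1 \<and> x \<in> a ` {..<n} \<union> c ` {..<m}) \<or>
           (x = z2 \<and> y \<in> b ` {..<n} \<union> d ` {..<m}) \<or> (y = z2 \<and> x \<in> b ` {..<n} \<union> d ` {..<m})"
  have "8 \<le> l" using assms(1) \<open>even l\<close> by presburger
  then have L: "2 \<le> l div 2 - 2" and L': "l div 2 - 1 = Suc (l div 2 - 2)" by simp_all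
  have "even_frame n m (l div 2 - 2) a b c d P Q R z1 z2 V E"
  proof unfold_locales
    show "\<forall>j<m. is_path (Q j) (Suc (l div 2 - 2)) (c j) (d j)" using facts(13) by (simp only: L')
  qed (fact L facts)+
  then show ?thesis by blast
qed

theorem mainTheorem14:
  fixes l :: nat and V :: "'a set" and E :: "'a \<Rightarrow> 'a \<Rightarrow> bool"
  assumes "l \<ge> 7"
    and "apexed_frame l V E"
    and "hole V E C"
    and "hole V E C'"
  shows "holes_equivalent V E C C'"
  using assms(2) unfolding apexed_frame_def
proof
  assume "odd_apexed_frame l V E"
  from odd_apexed_frame_imp_odd_frame[OF assms(1) this] obtain k a b P EA z
    where "odd_frame k ((l - 3) div 2) a b P EA z V E" by blast
  then show ?thesis by (rule odd_frame.all_holes_equivalent[OF _ assms(3,4)])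
next
  assume "even_apexed_frame l V E"
  from even_apexed_frame_imp_even_frame[OF assms(1) this] obtain n m a b c d P Q R z1 z2
    where "even_frame n m (l div 2 - 2) a b c d P Q R z1 z2 V E" by (elim exE) blast
  then show ?thesis by (rule even_frame.all_holes_equivalent[OF _ assms(3,4)])
qed

end
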